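(* Let $N$ be a non-negative integer, $\beta=N+1$, $\lambda_1=(h_1+h_2-l_1-l_2-\alpha_1-\alpha_2-\beta+2)/2$, and assume $-\lambda_1-\alpha_1\notin\{0,1,\dots,N-1\}$ and $\lambda_1+\alpha_2>1$ (real). Let $c_k(E)$, $c(E)$ be as in the context and $c(E_0)=0$. Assume the parameters and $x$ are generic so that all expressions below are defined. Define $$g_6(x)=(1-q)x^{-\alpha_1}\frac{(q,\ q^{l_1-l_2+1}t_1/t_2,\ q^{\lambda_1+l_1+\alpha_1+1/2}t_1/x;q)_\infty}{(q^{\lambda_1-h_1+l_1+\alpha_1},\ q^{\lambda_1-h_2+l_1+\alpha_1}t_1/t_2,\ q^{l_1+1/2}t_1/x;q)_\infty}\sum_{k=0}^{N}(q^{l_1+1/2}t_1)^{k+1}c_k(E_0)\,{}_3\phi_2\!\left(\begin{matrix}q^{\lambda_1-h_1+l_1+\alpha_1},\ q^{\lambda_1-h_2+l_1+\alpha_1}t_1/t_2,\ q^{l_1+1/2}t_1/x\\ q^{l_1-l_2+1}t_1/t_2,\ q^{\lambda_1+l_1+\alpha_1+1/2}t_1/x\end{matrix};q,q^{k+1}\right),$$ $$g_7(x)=(1-q)x^{-\alpha_1}\frac{(q,\ q^{-l_1+l_2+1}t_2/t_1,\ q^{\lambda_1+l_2+\alpha_1+1/2}t_2/x;q)_\infty}{(q^{\lambda_1-h_2+l_2+\alpha_1},\ q^{\lambda_1-h_1+l_2+\alpha_1}t_2/t_1,\ q^{l_2+1/2}t_2/x;q)_\infty}\sum_{k=0}^{N}(q^{l_2+1/2}t_2)^{k+1}c_k(E_0)\,{}_3\phi_2\!\left(\begin{matrix}q^{\lambda_1-h_2+l_2+\alpha_1},\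 q^{\lambda_1-h_1+l_2+\alpha_1}t_2/t_1,\ q^{l_2+1/2}t_2/x\\ q^{-l_1+l_2+1}t_2/t_1,\ q^{\lambda_1+l_2+\alpha_1+1/2}t_2/x\end{matrix};q,q^{k+1}\right),$$ $$g_8(x)=(1-q)x^{-\alpha_1}\frac{(q,\ q^{-\lambda_1-l_1-\alpha_1+3/2}x/t_1,\ q^{-\lambda_1-l_2-\alpha_1+3/2}x/t_2;q)_\infty}{(q^{-\lambda_1-\alpha_1+1},\ q^{-h_1+1/2}x/t_1,\ q^{-h_2+1/2}x/t_2;q)_\infty}\sum_{k=0}^{N}(q^{-\lambda_1-\alpha_1+1}x)^{k+1}c_k(E_0)\,{}_3\phi_2\!\left(\begin{matrix}q^{-\lambda_1-\alpha_1+1},\ q^{-h_1+1/2}x/t_1,\ q^{-h_2+1/2}x/t_2\\ q^{-\lambda_1-l_1-\alpha_1+3/2}x/t_1,\ q^{-\lambda_1-l_2-\alpha_1+3/2}x/t_2\end{matrix};q,q^{k+1}\right).$$ Then (iv) for all $i,j\in\{6,7,8\}$ the function $g_i(x)-g_j(x)$ satisfies $A^{\langle4\rangle}(x;h_1,h_2,l_1,l_2,\alpha_1,\alpha_2,\beta)g(x)=E_0g(x)$; and (v) each of $g_6,g_7,g_8$ satisfies $$A^{\langle4\rangle}(x;h_1,h_2,l_1,l_2,\alpha_1,\alpha_2,\beta)g(x)=E_0g(x)-(1-q)x^{-\alpha_1}q^{-\lambda_1+h_1+h_2+1}(q^{-\lambda_1-\alpha_1-N}-1)t_1t_2.$$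
   Context: $q\in\mathbb{C}$ with $0<|q|<1$; powers via a fixed branch of $\log q$ (for real $a$, $|q^a|=|q|^a$); $x^a$ fixed branch with $(qx)^a=q^ax^a$. $(a;q)_\infty=\prod_{k\ge0}(1-aq^k)$, $(a;q)_n=(a;q)_\infty/(aq^n;q)_\infty$, $(a_1,\dots,a_m;q)_n=\prod_i(a_i;q)_n$. ${}_3\phi_2\!\left(\begin{matrix}a_1,a_2,a_3\\ b_1,b_2\end{matrix};q,z\right)=\sum_{n\ge0}\frac{(a_1,a_2,a_3;q)_n}{(q,b_1,b_2;q)_n}z^n$. $t_1,t_2$ fixed non-zero; $T_x^{\pm1}g(x)=g(q^{\pm1}x)$; $A^{\langle 4\rangle}(x;h_1,h_2,l_1,l_2,\alpha_1,\alpha_2,\beta)=x^{-1}(x-q^{h_1+1/2}t_1)(x-q^{h_2+1/2}t_2)T_x^{-1}+q^{\alpha_1+\alpha_2}x^{-1}(x-q^{l_1-1/2}t_1)(x-q^{l_2-1/2}t_2)T_x-\{(q^{\alpha_1}+q^{\alpha_2})x+q^{(h_1+h_2+l_1+l_2+\alpha_1+\alpha_2)/2}(q^{\beta/2}+q^{-\beta/2})t_1t_2x^{-1}\}$. Polynomials: $x_n=t_1t_2q^{n-N+1+h_1+h_2-\alpha_1-2\lambda_1}(1-q^{-n})(1-q^{N-n+\lambda_1+\alpha_1})$, $y_n=q^{N-n+1/2+\lambda_1+\alpha_1+\alpha_2}(q^{l_1}t_1+q^{l_2}t_2)+q^{n-N-1/2-\lambda_1}(q^{h_1}t_1+q^{h_2}t_2)$,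 $z_n=q^{n-N-2+\alpha_1}(1-q^{N-n+1+\lambda_1+\alpha_2})(1-q^{N-n+2})$; $c_{-1}(E)=0$, $c_0(E)=1$, $c_n(E)x_n=c_{n-1}(E)(E+y_n)-c_{n-2}(E)z_n$ for $n=1,\dots,N$, $c(E)=x_1\cdots x_N[c_N(E)(E+y_{N+1})-c_{N-1}(E)z_{N+1}]$. *)

theory Defs
  imports "HOL-Analysis.Analysis"
begin

text \<open>q-powers: \<open>qpow L a = q^a\<close> where \<open>L\<close> is the fixed branch of log q (exp L = q).\<close>
definition qpow :: "complex \<Rightarrow> complex \<Rightarrow> complex" where
  "qpow L a = exp (a * L)"

definition qpinf :: "complex \<Rightarrow> complex \<Rightarrow> complex" where
  "qpinf q a = (\<Prod>k. 1 - a * q ^ k)"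

definition qpn :: "complex \<Rightarrow> complex \<Rightarrow> nat \<Rightarrow> complex" where
  "qpn q a n = (\<Prod>k<n. 1 - a * q ^ k)"

definition phi32 :: "complex \<Rightarrow> complex \<Rightarrow> complex \<Rightarrow> complex \<Rightarrow> complex \<Rightarrow> complex \<Rightarrow> complex \<Rightarrow> complex" where
  "phi32 q a1 a2 a3 b1 b2 z =
     (\<Sum>n. (qpn q a1 n * qpn q a2 n * qpn q a3 n) / (qpn q q n * qpn q b1 n * qpn q b2 n) * z ^ n)"

definition Aop :: "complex \<Rightarrow> complex \<Rightarrow> complex \<Rightarrow> complex \<Rightarrow> complex \<Rightarrow> complex \<Rightarrow> complex \<Rightarrow> complex
    \<Rightarrow> complex \<Rightarrow> complex \<Rightarrow> complex \<Rightarrow> (complex \<Rightarrow> complex) \<Rightarrow> complex \<Rightarrow> complex" where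
  "Aop q L t1 t2 h1 h2 l1 l2 a1 a2 b g x =
     inverse x * (x - qpow L (h1 + 1/2) * t1) * (x - qpow L (h2 + 1/2) * t2) * g (x / q)
   + qpow L (a1 + a2) * inverse x * (x - qpow L (l1 - 1/2) * t1) * (x - qpow L (l2 - 1/2) * t2) * g (q * x)
   - ((qpow L a1 + qpow L a2) * x
      + qpow L ((h1 + h2 + l1 + l2 + a1 + a2) / 2) * (qpow L (b / 2) + qpow L (- b / 2)) * t1 * t2 * inverse x)
     * g x"

definition lam1 :: "complex \<Rightarrow> complex \<Rightarrow> complex \<Rightarrow> complex \<Rightarrow> complex \<Rightarrow> complex \<Rightarrow> complex \<Rightarrow> complex" where
  "lam1 h1 h2 l1 l2 a1 a2 b = (h1 + h2 - l1 - l2 - a1 - a2 - b + 2) / 2"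

definition xc :: "complex \<Rightarrow> complex \<Rightarrow> complex \<Rightarrow> complex \<Rightarrow> complex \<Rightarrow> complex \<Rightarrow> complex \<Rightarrow> nat \<Rightarrow> nat \<Rightarrow> complex" where
  "xc L t1 t2 h1 h2 a1 lam N n =
     t1 * t2 * qpow L (of_nat n - of_nat N + 1 + h1 + h2 - a1 - 2 * lam)
       * (1 - qpow L (- of_nat n)) * (1 - qpow L (of_nat N - of_nat n + lam + a1))"

definition yc :: "complex \<Rightarrow> complex \<Rightarrow> complex \<Rightarrow> complex \<Rightarrow> complex \<Rightarrow> complex \<Rightarrow> complex \<Rightarrow> complex \<Rightarrow> complex \<Rightarrow> complex \<Rightarrow> nat \<Rightarrow> nat \<Rightarrow> complex" where
  "yc L t1 t2 h1 h2 l1 l2 a1 a2 lam N n =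
     qpow L (of_nat N - of_nat n + 1/2 + lam + a1 + a2) * (qpow L l1 * t1 + qpow L l2 * t2)
   + qpow L (of_nat n - of_nat N - 1/2 - lam) * (qpow L h1 * t1 + qpow L h2 * t2)"

definition zc :: "complex \<Rightarrow> complex \<Rightarrow> complex \<Rightarrow> complex \<Rightarrow> nat \<Rightarrow> nat \<Rightarrow> complex" where
  "zc L a1 a2 lam N n =
     qpow L (of_nat n - of_nat N - 2 + a1) * (1 - qpow L (of_nat N - of_nat n + 1 + lam + a2))
       * (1 - qpow L (of_nat N - of_nat n + 2))"

fun cseq :: "(nat \<Rightarrow> complex) \<Rightarrow> (nat \<Rightarrow> complex) \<Rightarrow> (nat \<Rightarrow> complex) \<Rightarrow> complex \<Rightarrow> nat \<Rightarrow> complex" where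
  "cseq X Y Z E 0 = 1"
| "cseq X Y Z E (Suc 0) = (E + Y 1) / X 1"
| "cseq X Y Z E (Suc (Suc n)) =
     (cseq X Y Z E (Suc n) * (E + Y (n + 2)) - cseq X Y Z E n * Z (n + 2)) / X (n + 2)"

definition cfin :: "(nat \<Rightarrow> complex) \<Rightarrow> (nat \<Rightarrow> complex) \<Rightarrow> (nat \<Rightarrow> complex) \<Rightarrow> complex \<Rightarrow> nat \<Rightarrow> complex" where
  "cfin X Y Z E N = (\<Prod>n\<in>{1..N}. X n) *
     (cseq X Y Z E N * (E + Y (N + 1)) - (if N = 0 then 0 else cseq X Y Z E (N - 1)) * Z (N + 1))"

text \<open>Here \<open>xa\<close> is the value x^{-alpha1} and \<open>C k\<close> = c_k(E_0).\<close>
definition gshape :: "complex \<Rightarrow> complex \<Rightarrow> complex \<Rightarrow> complex \<Rightarrow> complex \<Rightarrow> complex \<Rightarrow> complex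
     \<Rightarrow> complex \<Rightarrow> (nat \<Rightarrow> complex) \<Rightarrow> nat \<Rightarrow> complex" where
  "gshape q xa b1 b2 b3 d1 d2 s C N =
     (1 - q) * xa * (qpinf q q * qpinf q d1 * qpinf q d2) / (qpinf q b1 * qpinf q b2 * qpinf q b3)
     * (\<Sum>k\<le>N. s ^ (k + 1) * C k * phi32 q b1 b2 b3 d1 d2 (q ^ (k + 1)))"

definition gpar :: "nat \<Rightarrow> complex \<Rightarrow> complex \<Rightarrow> complex \<Rightarrow> complex \<Rightarrow> complex \<Rightarrow> complex \<Rightarrow> complex
     \<Rightarrow> complex \<Rightarrow> complex \<Rightarrow> complex
     \<Rightarrow> complex \<times> complex \<times> complex \<times> complex \<times> complex \<times> complex" where
  "gpar i L t1 t2 h1 h2 l1 l2 a1 lam x =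
    (if i = 6 then
       (qpow L (lam - h1 + l1 + a1), qpow L (lam - h2 + l1 + a1) * t1 / t2, qpow L (l1 + 1/2) * t1 / x,
        qpow L (l1 - l2 + 1) * t1 / t2, qpow L (lam + l1 + a1 + 1/2) * t1 / x,
        qpow L (l1 + 1/2) * t1)
     else if i = 7 then
       (qpow L (lam - h2 + l2 + a1), qpow L (lam - h1 + l2 + a1) * t2 / t1, qpow L (l2 + 1/2) * t2 / x,
        qpow L (- l1 + l2 + 1) * t2 / t1, qpow L (lam + l2 + a1 + 1/2) * t2 / x,
        qpow L (l2 + 1/2) * t2)
     else
       (qpow L (- lam - a1 + 1), qpow L (- h1 + 1/2) * x / t1, qpow L (- h2 + 1/2) * x / t2,
        qpow L (- lam - l1 - a1 + 3/2) * x / t1, qpow L (- lam - l2 - a1 + 3/2) * x / t2,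
        qpow L (- lam - a1 + 1) * x))"

text \<open>g_i(x) for i = 6,7,8; \<open>lg\<close> is the fixed branch of log used for x^{-alpha1}.\<close>
definition gfun :: "nat \<Rightarrow> complex \<Rightarrow> complex \<Rightarrow> (complex \<Rightarrow> complex) \<Rightarrow> complex \<Rightarrow> complex \<Rightarrow> complex
     \<Rightarrow> complex \<Rightarrow> complex \<Rightarrow> complex \<Rightarrow> complex \<Rightarrow> complex \<Rightarrow> (nat \<Rightarrow> complex) \<Rightarrow> nat \<Rightarrow> complex \<Rightarrow> complex" where
  "gfun i q L lg t1 t2 h1 h2 l1 l2 a1 lam C N x =
     (case gpar i L t1 t2 h1 h2 l1 l2 a1 lam x of (b1, b2, b3, d1, d2, s) \<Rightarrow>
        gshape q (exp (- a1 * lg x)) b1 b2 b3 d1 d2 s C N)"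

text \<open>Non-degeneracy of a q-Pochhammer parameter: a q^n \<noteq> 1 for all n, i.e. (a;q)_inf \<noteq> 0
  and (a;q)_n \<noteq> 0 for all n.\<close>
definition nondeg :: "complex \<Rightarrow> complex \<Rightarrow> bool" where
  "nondeg q a \<longleftrightarrow> (\<forall>n::nat. a * q ^ n \<noteq> 1)"

definition gen_at :: "nat \<Rightarrow> complex \<Rightarrow> complex \<Rightarrow> complex \<Rightarrow> complex \<Rightarrow> complex \<Rightarrow> complex \<Rightarrow> complex
     \<Rightarrow> complex \<Rightarrow> complex \<Rightarrow> complex \<Rightarrow> complex \<Rightarrow> bool" where
  "gen_at i q L t1 t2 h1 h2 l1 l2 a1 lam x \<longleftrightarrow> x \<noteq> 0 \<and>
     (case gpar i L t1 t2 h1 h2 l1 l2 a1 lam x of (b1, b2, b3, d1, d2, s) \<Rightarrow>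
        nondeg q b1 \<and> nondeg q b2 \<and> nondeg q b3 \<and> nondeg q d1 \<and> nondeg q d2)"

end

theory Submission
  imports Defs
begin

text \<open>Expanding \<open>c_k(E_0)\<close> times the 3phi2 series and summing over \<open>k\<close> first writes each \<open>g_i\<close> as a
  Jackson integral \<open>(1 - q) x^{-\<alpha>1} \<Sum>\<^sub>n w(t\<^sub>n) t\<^sub>n P(t\<^sub>n)\<close> over a lattice \<open>t\<^sub>n = s q^n\<close>, where
  \<open>P(t) = \<Sum>\<^sub>k c_k(E_0) t^k\<close> and \<open>w\<close> is a ratio of infinite q-Pochhammer products. The starting points
  \<open>s = q^(l_1+1/2) t_1\<close>, \<open>q^(l_2+1/2) t_2\<close> (for \<open>g_6, g_7\<close>) do not depend on \<open>x\<close>, while for \<open>g_8\<close> the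
  lattice moves with \<open>x\<close>. The three-term recurrence, closed off by \<open>c(E_0) = 0\<close>, says that \<open>P\<close> solves
  a second-order q-difference equation. Together with the q-shift relations of \<open>w\<close> in \<open>t\<close> and \<open>x\<close>
  it makes the \<open>n\<close>-th term of \<open>(A - E_0) g_i\<close> a difference \<open>B(t\<^sub>n) - B(t\<^sub>n\<^sub>+\<^sub>1)\<close>. The boundary term \<open>B\<close>
  vanishes at \<open>t\<^sub>0 = s\<close>, so the sum telescopes to \<open>-B(0)\<close>, which is the constant in (v) for all three
  lattices; (iv) follows by linearity.\<close>

section \<open>q-Pochhammer products\<close>

lemma convergent_prod_qpinf:
  fixes a q :: complex
  assumes "norm q < 1"
  shows "convergent_prod (\<lambda>k. 1 - a * q ^ k)"
proof -
  have "summable (\<lambda>k. norm a * norm q ^ k)"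
    using assms by (intro summable_mult summable_geometric) simp
  then have "summable (\<lambda>k. norm ((1 - a * q ^ k) - 1))"
    by (simp add: norm_mult norm_power)
  then show ?thesis
    by (intro abs_convergent_prod_imp_convergent_prod summable_imp_abs_convergent_prod)
qed

lemma qpinf_eq_qpn_mult:
  fixes a q :: complex
  assumes "norm q < 1"
  shows "qpinf q a = qpn q a n * qpinf q (a * q ^ n)"
proof -
  have "(\<lambda>k. 1 - a * q ^ k) has_prod ((\<Prod>k<n. 1 - a * q ^ k) * (\<Prod>k. 1 - a * q ^ (k + n)))"
    by (rule has_prod_ignore_initial_segment'[OF convergent_prod_qpinf[OF assms]])
  moreover have "(\<lambda>k. 1 - a * q ^ (k + n)) = (\<lambda>k. 1 - (a * q ^ n) * q ^ k)"
    by (simp add: power_add algebra_simps)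
  ultimately show ?thesis
    unfolding qpinf_def qpn_def using has_prod_unique by metis
qed

lemma qpinf_unfold:
  fixes a q :: complex
  assumes "norm q < 1"
  shows "qpinf q a = (1 - a) * qpinf q (a * q)"
  using qpinf_eq_qpn_mult[OF assms, of a 1] by (simp add: qpn_def)

lemma nondeg_mult_power: "nondeg q a \<Longrightarrow> nondeg q (a * q ^ n)"
  unfolding nondeg_def by (metis mult.assoc power_add)

lemma nondeg_factor_nonzero: "nondeg q a \<Longrightarrow> 1 - a * q ^ n \<noteq> 0"
  unfolding nondeg_def by auto

lemma nondeg_self:
  fixes q :: complex
  assumes "norm q < 1"
  shows "nondeg q q"
proof -
  have "norm (q * q ^ n) < 1" for n
  proof -
    have "norm (q * q ^ n) = norm q * norm q ^ n" by (simp add: norm_mult norm_power)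
    also have "\<dots> \<le> norm q" using assms by (simp add: mult_left_le power_le_one)
    finally show ?thesis using assms by simp
  qed
  then show ?thesis unfolding nondeg_def by (metis norm_one less_irrefl)
qed

lemma qpinf_nonzero:
  fixes a q :: complex
  assumes "norm q < 1" "nondeg q a"
  shows "qpinf q a \<noteq> 0"
  unfolding qpinf_def
  by (rule prodinf_nonzero[OF convergent_prod_qpinf[OF assms(1)]])
    (use assms(2) nondeg_factor_nonzero in auto)

lemma qpn_nonzero: "nondeg q a \<Longrightarrow> qpn q a n \<noteq> 0"
  unfolding qpn_def using nondeg_factor_nonzero by auto

lemma qpn_tendsto_qpinf:
  fixes a q :: complex
  assumes "norm q < 1"
  shows "(\<lambda>n. qpn q a n) \<longlonglongrightarrow> qpinf q a"
proof -
  have "(\<lambda>n. \<Prod>k\<le>n. 1 - a * q ^ k) \<longlonglongrightarrow> qpinf q a"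
    unfolding qpinf_def by (rule convergent_prod_LIMSEQ[OF convergent_prod_qpinf[OF assms]])
  then have "(\<lambda>n. qpn q a (Suc n)) \<longlonglongrightarrow> qpinf q a"
    by (simp add: qpn_def lessThan_Suc_atMost)
  then show ?thesis by (rule filterlim_sequentially_Suc[THEN iffD1])
qed

lemma qpinf_tail_tendsto_1:
  fixes a q :: complex
  assumes "norm q < 1" "nondeg q a"
  shows "(\<lambda>n. qpinf q (a * q ^ n)) \<longlonglongrightarrow> 1"
proof -
  have "(\<lambda>n. qpinf q a / qpn q a n) \<longlonglongrightarrow> qpinf q a / qpinf q a"
    by (intro tendsto_divide qpn_tendsto_qpinf assms tendsto_const qpinf_nonzero)
  moreover have "qpinf q a / qpn q a n = qpinf q (a * q ^ n)" for n
    using qpinf_eq_qpn_mult[OF assms(1), of a n] qpn_nonzero[OF assms(2), of n] by simp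
  ultimately show ?thesis using qpinf_nonzero[OF assms] by simp
qed

section \<open>The 3phi2 sums as Jackson sums\<close>

text \<open>The \<open>n\<close>-th coefficient \<open>(b1,b2,b3;q)_n / (q,d1,d2;q)_n\<close> of the 3phi2 series times the prefactor
  \<open>(q,d1,d2;q)_inf / (b1,b2,b3;q)_inf\<close> of \<open>gshape\<close>: the Jackson weight \<open>w(s q^n)\<close>.\<close>
definition tail_ratio :: "complex \<Rightarrow> complex \<Rightarrow> complex \<Rightarrow> complex \<Rightarrow> complex \<Rightarrow> complex \<Rightarrow> nat \<Rightarrow> complex"
  where "tail_ratio q b1 b2 b3 d1 d2 n =
    qpinf q (q * q ^ n) * qpinf q (d1 * q ^ n) * qpinf q (d2 * q ^ n)
      / (qpinf q (b1 * q ^ n) * qpinf q (b2 * q ^ n) * qpinf q (b3 * q ^ n))"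

definition coeff_poly :: "(nat \<Rightarrow> complex) \<Rightarrow> nat \<Rightarrow> complex \<Rightarrow> complex"
  where "coeff_poly C N t = (\<Sum>k\<le>N. C k * t ^ k)"

lemma tail_ratio_tendsto_1:
  fixes q :: complex
  assumes q: "norm q < 1"
    and nd: "nondeg q b1" "nondeg q b2" "nondeg q b3" "nondeg q d1" "nondeg q d2"
  shows "tail_ratio q b1 b2 b3 d1 d2 \<longlonglongrightarrow> 1"
proof -
  have "tail_ratio q b1 b2 b3 d1 d2 \<longlonglongrightarrow> 1 * 1 * 1 / (1 * 1 * 1)"
    unfolding tail_ratio_def by (intro tendsto_intros qpinf_tail_tendsto_1 q nd nondeg_self) simp
  then show ?thesis by simp
qed

lemma summable_Bseq_mult_power:
  fixes f :: "nat \<Rightarrow> complex"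
  assumes "Bseq f" "norm z < 1"
  shows "summable (\<lambda>n. f n * z ^ n)"
proof -
  from assms(1) obtain K where K: "\<forall>n. norm (f n) \<le> K" by (auto elim: BseqE)
  have "summable (\<lambda>n. K * norm z ^ n)"
    using assms(2) by (intro summable_mult summable_geometric) simp
  moreover have "norm (f n * z ^ n) \<le> K * norm z ^ n" for n
    using K by (simp add: norm_mult norm_power mult_right_mono)
  ultimately show ?thesis by (rule summable_comparison_test'[where N=0])
qed

lemma coeff_poly_tendsto:
  assumes "f \<longlonglongrightarrow> 0"
  shows "(\<lambda>n. coeff_poly C N (f n)) \<longlonglongrightarrow> C 0"
proof -
  have "(\<lambda>n. coeff_poly C N (f n)) \<longlonglongrightarrow> coeff_poly C N 0"
    unfolding coeff_poly_def by (intro tendsto_intros assms)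
  moreover have "coeff_poly C N 0 = C 0"
    unfolding coeff_poly_def by (simp add: power_0_left sum.atMost_shift)
  ultimately show ?thesis by simp
qed

lemma gshape_jackson_sums:
  fixes q s xa :: complex and C :: "nat \<Rightarrow> complex" and N :: nat
  assumes q: "norm q < 1"
    and nd: "nondeg q b1" "nondeg q b2" "nondeg q b3" "nondeg q d1" "nondeg q d2"
  shows "(\<lambda>n. (1 - q) * xa * (tail_ratio q b1 b2 b3 d1 d2 n * (s * q ^ n) * coeff_poly C N (s * q ^ n)))
           sums gshape q xa b1 b2 b3 d1 d2 s C N"
proof -
  define V where "V = tail_ratio q b1 b2 b3 d1 d2"
  define Pref where "Pref = qpinf q q * qpinf q d1 * qpinf q d2 / (qpinf q b1 * qpinf q b2 * qpinf q b3)"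
  have nq: "nondeg q q" by (rule nondeg_self[OF q])
  have Pref_nonzero: "Pref \<noteq> 0"
    unfolding Pref_def using qpinf_nonzero[OF q] nd nq by simp
  have coeff: "qpn q b1 n * qpn q b2 n * qpn q b3 n / (qpn q q n * qpn q d1 n * qpn q d2 n) = V n / Pref" for n
  proof -
    have split: "qpinf q a = qpn q a n * qpinf q (a * q ^ n)" for a
      by (rule qpinf_eq_qpn_mult[OF q])
    have nz: "qpn q a n \<noteq> 0" "qpinf q (a * q ^ n) \<noteq> 0" if "nondeg q a" for a
      using that qpn_nonzero qpinf_nonzero[OF q] nondeg_mult_power by auto
    show ?thesis
      unfolding V_def tail_ratio_def Pref_def split[of q] split[of d1] split[of d2] split[of b1]
        split[of b2] split[of b3]
      using nz[OF nq] nz[OF nd(1)] nz[OF nd(2)] nz[OF nd(3)] nz[OF nd(4)] nz[OF nd(5)]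
      by (simp add: field_simps mult.commute[of _ q])
  qed
  have "Bseq V"
    unfolding V_def by (rule convergent_imp_Bseq, rule convergentI, rule tail_ratio_tendsto_1[OF q nd])
  moreover have "norm (q ^ (k + 1)) < 1" for k
    using q by (subst norm_power, subst power_less_one_iff) auto
  ultimately have sums_k: "(\<lambda>n. V n * (q ^ (k + 1)) ^ n) sums (Pref * phi32 q b1 b2 b3 d1 d2 (q ^ (k + 1)))" for k
    using summable_sums[OF summable_Bseq_mult_power] Pref_nonzero
    by (simp add: phi32_def coeff suminf_divide[OF summable_Bseq_mult_power] )
  have "(\<lambda>n. \<Sum>k\<le>N. (1 - q) * xa * s ^ (k + 1) * C k * (V n * (q ^ (k + 1)) ^ n))
      sums (\<Sum>k\<le>N. (1 - q) * xa * s ^ (k + 1) * C k * (Pref * phi32 q b1 b2 b3 d1 d2 (q ^ (k + 1))))"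
    by (intro sums_sum sums_mult sums_k)
  moreover have "(\<Sum>k\<le>N. (1 - q) * xa * s ^ (k + 1) * C k * (V n * (q ^ (k + 1)) ^ n))
      = (1 - q) * xa * (V n * (s * q ^ n) * coeff_poly C N (s * q ^ n))" for n
    unfolding coeff_poly_def
    by (simp add: sum_distrib_left power_mult_distrib power_mult[symmetric] mult_ac)
  moreover have "(\<Sum>k\<le>N. (1 - q) * xa * s ^ (k + 1) * C k * (Pref * phi32 q b1 b2 b3 d1 d2 (q ^ (k + 1))))
      = gshape q xa b1 b2 b3 d1 d2 s C N"
    unfolding gshape_def Pref_def sum_distrib_left
    by (rule sum.cong) (simp_all add: mult_ac)
  ultimately show ?thesis unfolding V_def by simp
qed

lemma qpinf_shift_factor:
  fixes c q :: complex
  assumes "norm q < 1" "c' = c * q"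
  shows "qpinf q (c * q ^ n) = (1 - c * q ^ n) * qpinf q (c' * q ^ n)"
  using qpinf_unfold[OF assms(1), of "c * q ^ n"] assms(2) by (simp add: mult_ac)

lemma tail_ratio_Suc:
  fixes q :: complex
  assumes q: "norm q < 1" and nd: "nondeg q b1" "nondeg q b2" "nondeg q b3"
  shows "tail_ratio q b1 b2 b3 d1 d2 (Suc n) * ((1 - q * q ^ n) * (1 - d1 * q ^ n) * (1 - d2 * q ^ n))
       = tail_ratio q b1 b2 b3 d1 d2 n * ((1 - b1 * q ^ n) * (1 - b2 * q ^ n) * (1 - b3 * q ^ n))"
proof -
  have shift: "qpinf q (c * q ^ n) = (1 - c * q ^ n) * qpinf q (c * q ^ Suc n)" for c
    using qpinf_shift_factor[OF q refl, of c n] by (simp add: mult_ac)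
  have nz: "qpinf q (c * q ^ m) \<noteq> 0" "1 - c * q ^ m \<noteq> 0" if "nondeg q c" for c m
    using qpinf_nonzero[OF q nondeg_mult_power[OF that]] nondeg_factor_nonzero[OF that] by auto
  have cancel: "f0 * f1 * f2 / (g1 * g2 * g3) * (u0 * u1 * u2)
     = (u0 * f0) * (u1 * f1) * (u2 * f2) / ((v1 * g1) * (v2 * g2) * (v3 * g3)) * (v1 * v2 * v3)"
    if "v1 \<noteq> 0" "v2 \<noteq> 0" "v3 \<noteq> 0" "g1 \<noteq> 0" "g2 \<noteq> 0" "g3 \<noteq> 0"
    for f0 f1 f2 g1 g2 g3 u0 u1 u2 v1 v2 v3 :: complex
    using that by (simp add: field_simps)
  show ?thesis
    unfolding tail_ratio_def shift[of q] shift[of d1] shift[of d2] shift[of b1] shift[of b2] shift[of b3]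
    by (rule cancel) (use nz[OF nd(1)] nz[OF nd(2)] nz[OF nd(3)] nz(1)[OF nd(1), of "Suc n"]
      nz(1)[OF nd(2), of "Suc n"] nz(1)[OF nd(3), of "Suc n"] in auto)
qed

lemma tail_ratio_shift_b3_d2:
  fixes q :: complex
  assumes q: "norm q < 1"
    and nd: "nondeg q b1" "nondeg q b2" "nondeg q b3" "nondeg q b3'"
    and shifted: "b3' = b3 * q" "d2' = d2 * q"
  shows "tail_ratio q b1 b2 b3' d1 d2' n * (1 - d2 * q ^ n) = tail_ratio q b1 b2 b3 d1 d2 n * (1 - b3 * q ^ n)"
proof -
  have nz: "qpinf q (c * q ^ n) \<noteq> 0" "1 - c * q ^ n \<noteq> 0" if "nondeg q c" for c
    using qpinf_nonzero[OF q nondeg_mult_power[OF that]] nondeg_factor_nonzero[OF that] by auto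
  show ?thesis
    unfolding tail_ratio_def qpinf_shift_factor[OF q shifted(1)] qpinf_shift_factor[OF q shifted(2)]
    using nz[OF nd(1)] nz[OF nd(2)] nz[OF nd(3)] nz[OF nd(4)] by (simp add: field_simps)
qed

lemma tail_ratio_shift_b23_d12:
  fixes q :: complex
  assumes q: "norm q < 1"
    and nd: "nondeg q b1" "nondeg q b2" "nondeg q b3" "nondeg q b2'" "nondeg q b3'"
    and shifted: "b2' = b2 * q" "b3' = b3 * q" "d1' = d1 * q" "d2' = d2 * q"
  shows "tail_ratio q b1 b2' b3' d1' d2' n * ((1 - d1 * q ^ n) * (1 - d2 * q ^ n))
       = tail_ratio q b1 b2 b3 d1 d2 n * ((1 - b2 * q ^ n) * (1 - b3 * q ^ n))"
proof -
  have nz: "qpinf q (c * q ^ n) \<noteq> 0" "1 - c * q ^ n \<noteq> 0" if "nondeg q c" for c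
    using qpinf_nonzero[OF q nondeg_mult_power[OF that]] nondeg_factor_nonzero[OF that] by auto
  have cancel: "f0 * f1 * f2 / (g1 * g2 * g3) * (u1 * u2)
     = f0 * (u1 * f1) * (u2 * f2) / (g1 * (v2 * g2) * (v3 * g3)) * (v2 * v3)"
    if "v2 \<noteq> 0" "v3 \<noteq> 0" "g1 \<noteq> 0" "g2 \<noteq> 0" "g3 \<noteq> 0" for f0 f1 f2 g1 g2 g3 u1 u2 v2 v3 :: complex
    using that by (simp add: field_simps)
  show ?thesis
    unfolding tail_ratio_def qpinf_shift_factor[OF q shifted(1)] qpinf_shift_factor[OF q shifted(2)]
      qpinf_shift_factor[OF q shifted(3)] qpinf_shift_factor[OF q shifted(4)]
    by (rule cancel) (use nz[OF nd(1)] nz[OF nd(2)] nz[OF nd(3)] nz[OF nd(4)] nz[OF nd(5)] in auto)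
qed

section \<open>The q-difference equation of the polynomial\<close>

text \<open>The recurrence of \<open>c_n\<close>, extended by \<open>c_n = 0\<close> outside \<open>0..N\<close>, holds for every \<open>n\<close>:
  at \<open>n = N + 1\<close> this is \<open>c(E) = 0\<close>, at \<open>n = N + 2\<close> it is \<open>Z (N + 2) = 0\<close>.\<close>
lemma cseq_recurrence_extended:
  fixes X Y Z :: "nat \<Rightarrow> complex" and E :: complex and N :: nat
  defines "c \<equiv> (\<lambda>n. if n \<le> N then cseq X Y Z E n else 0)"
  assumes X0: "X 0 = 0" and X_nonzero: "\<forall>n\<in>{1..N}. X n \<noteq> 0" and Z_N2: "Z (N + 2) = 0"
    and cfin: "cfin X Y Z E N = 0"
  shows "X n * c n - (E + Y n) * (if n = 0 then 0 else c (n - 1)) + Z n * (if n < 2 then 0 else c (n - 2)) = 0"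
proof -
  consider "n = 0" | "n = 1" "1 \<le> N" | m where "n = m + 2" "m + 2 \<le> N" | "n = N + 1" | "n = N + 2"
    | "n > N + 2"
    by (cases n; cases "n - 1"; auto; linarith)
  then show ?thesis
  proof cases
    case 1
    then show ?thesis by (simp add: X0)
  next
    case 2
    then show ?thesis using X_nonzero by (simp add: c_def field_simps)
  next
    case 3
    then have "X (m + 2) \<noteq> 0" using X_nonzero by auto
    with 3 show ?thesis by (simp add: c_def numeral_2_eq_2 field_simps)
  next
    case 4
    have "(\<Prod>n\<in>{1..N}. X n) \<noteq> 0" using X_nonzero by simp
    with cfin have "cseq X Y Z E N * (E + Y (N + 1))
        - (if N = 0 then 0 else cseq X Y Z E (N - 1)) * Z (N + 1) = 0"
      unfolding cfin_def by simp
    with 4 show ?thesis by (cases N) (auto simp: c_def algebra_simps)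
  next
    case 5
    then show ?thesis using Z_N2 by (simp add: c_def numeral_2_eq_2)
  next
    case 6
    then have "\<not> n - 2 \<le> N" "\<not> n - 1 \<le> N" "\<not> n \<le> N" by auto
    then show ?thesis by (simp add: c_def)
  qed
qed

lemma cseq_weighted_sum_eq_0:
  fixes X Y Z :: "nat \<Rightarrow> complex" and E t :: complex and N :: nat
  assumes X0: "X 0 = 0" and X_nonzero: "\<forall>n\<in>{1..N}. X n \<noteq> 0" and Z_N2: "Z (N + 2) = 0"
    and cfin: "cfin X Y Z E N = 0"
  shows "(\<Sum>m\<le>N. t ^ m * X m * cseq X Y Z E m - t ^ (m + 1) * (E + Y (m + 1)) * cseq X Y Z E m
      + t ^ (m + 2) * Z (m + 2) * cseq X Y Z E m) = 0"
proof -
  define cs where "cs = cseq X Y Z E"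
  define c where "c = (\<lambda>n. if n \<le> N then cs n else 0)"
  have shift0: "(\<Sum>n\<le>N + 2. t ^ n * X n * c n) = (\<Sum>m\<le>N. t ^ m * X m * cs m)"
    by (rule sum.mono_neutral_cong_right) (auto simp: c_def)
  have shift1: "(\<Sum>n\<le>N + 2. t ^ n * (E + Y n) * (if n = 0 then 0 else c (n - 1)))
      = (\<Sum>m\<le>N. t ^ (m + 1) * (E + Y (m + 1)) * cs m)"
  proof -
    have "(\<Sum>n\<le>Suc (N + 1). t ^ n * (E + Y n) * (if n = 0 then 0 else c (n - 1)))
        = (\<Sum>m\<le>N + 1. t ^ Suc m * (E + Y (Suc m)) * c m)"
      by (subst sum.atMost_Suc_shift) simp
    also have "\<dots> = (\<Sum>m\<le>N. t ^ (m + 1) * (E + Y (m + 1)) * cs m)"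
      by (rule sum.mono_neutral_cong_right) (auto simp: c_def)
    finally show ?thesis by simp
  qed
  have shift2: "(\<Sum>n\<le>N + 2. t ^ n * Z n * (if n < 2 then 0 else c (n - 2)))
      = (\<Sum>m\<le>N. t ^ (m + 2) * Z (m + 2) * cs m)"
  proof -
    have "(\<Sum>n\<le>Suc (Suc N). t ^ n * Z n * (if n < 2 then 0 else c (n - 2)))
        = (\<Sum>m\<le>N. t ^ Suc (Suc m) * Z (Suc (Suc m)) * c m)"
      by (simp only: sum.atMost_Suc_shift) simp
    also have "\<dots> = (\<Sum>m\<le>N. t ^ (m + 2) * Z (m + 2) * cs m)"
      by (intro sum.cong) (auto simp: c_def numeral_2_eq_2)
    finally show ?thesis by (simp add: numeral_2_eq_2)
  qed
  have "(\<Sum>m\<le>N. t ^ m * X m * cs m - t ^ (m + 1) * (E + Y (m + 1)) * cs m + t ^ (m + 2) * Z (m + 2) * cs m)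
      = (\<Sum>n\<le>N + 2. t ^ n * (X n * c n - (E + Y n) * (if n = 0 then 0 else c (n - 1))
          + Z n * (if n < 2 then 0 else c (n - 2))))"
    unfolding sum.distrib sum_subtractf shift0[symmetric] shift1[symmetric] shift2[symmetric]
    by (simp add: algebra_simps sum.distrib sum_subtractf)
  also have "\<dots> = 0"
    using cseq_recurrence_extended[OF X0 X_nonzero Z_N2 cfin] unfolding c_def cs_def by simp
  finally show ?thesis unfolding cs_def .
qed

lemma coeff_poly_qdifference_eq:
  fixes X Y Z :: "nat \<Rightarrow> complex" and E q t Cx Q Y1 Y2 Cz A B :: complex and N :: nat
  assumes q0: "q \<noteq> 0"
    and X_form: "\<And>n. X n = Cx * (q ^ n - 1) * (1 - Q / q ^ n)"
    and Y_form: "\<And>n. Y n = Y1 / q ^ n + Y2 * q ^ n"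
    and Z_form: "\<And>n. Z n = Cz * (q ^ n - (A + B) + A * B / q ^ n)"
    and X_nonzero: "\<forall>n\<in>{1..N}. X n \<noteq> 0" and Z_N2: "Z (N + 2) = 0"
    and cfin: "cfin X Y Z E N = 0"
  defines "P \<equiv> coeff_poly (cseq X Y Z E) N"
  shows "Cx * (P (q * t) - (1 + Q) * P t + Q * P (t / q)) - E * t * P t
     - t * (Y1 / q * P (t / q) + Y2 * q * P (q * t))
     + t ^ 2 * Cz * (q ^ 2 * P (q * t) - (A + B) * P t + A * B / q ^ 2 * P (t / q)) = 0"
proof -
  have summand: "t ^ m * X m * c - t ^ (m + 1) * (E + Y (m + 1)) * c + t ^ (m + 2) * Z (m + 2) * c
     = c * (Cx * ((q * t) ^ m - (1 + Q) * t ^ m + Q * (t / q) ^ m) - E * t * t ^ m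
       - t * (Y1 / q * (t / q) ^ m + Y2 * q * (q * t) ^ m)
       + t ^ 2 * Cz * (q ^ 2 * (q * t) ^ m - (A + B) * t ^ m + A * B / q ^ 2 * (t / q) ^ m))" for m c
  proof -
    have powers: "(q * t) ^ m = q ^ m * t ^ m" "(t / q) ^ m = t ^ m / q ^ m" "t ^ (m + 1) = t ^ m * t"
      "t ^ (m + 2) = t ^ m * t\<^sup>2" "q ^ (m + 1) = q ^ m * q" "q ^ (m + 2) = q ^ m * q\<^sup>2"
      by (simp_all add: power_mult_distrib power_divide power_add power2_eq_square)
    have "q ^ m \<noteq> 0" using q0 by simp
    then show ?thesis unfolding X_form Y_form Z_form powers using q0
      by (simp add: divide_simps power2_eq_square) (simp add: algebra_simps)
  qed
  show ?thesis
    using cseq_weighted_sum_eq_0[OF _ X_nonzero Z_N2 cfin, of t] X_form[of 0]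
    unfolding summand P_def coeff_poly_def
    by (simp add: sum_distrib_left sum_distrib_right sum.distrib sum_subtractf algebra_simps)
qed

text \<open>The q-difference equation of \<open>P\<close> in the parameters \<open>a = q^(\<lambda>1+\<alpha>1)\<close>, \<open>qa\<^sub>i = q^\<alpha>\<^sub>i\<close>,
  \<open>H\<^sub>i = q^(h\<^sub>i+1/2) t\<^sub>i\<close>, \<open>L\<^sub>i = q^(l\<^sub>i-1/2) t\<^sub>i\<close>, \<open>qN = q^N\<close>, with \<open>pm, p0, pp\<close> standing for
  \<open>P(t/q), P(t), P(q t)\<close>; in this factored form it exposes the zeros that make the Jackson sums
  telescope.\<close>
definition poly_qde :: "complex \<Rightarrow> complex \<Rightarrow> complex \<Rightarrow> complex \<Rightarrow> complex \<Rightarrow> complex \<Rightarrow> complex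
    \<Rightarrow> complex \<Rightarrow> complex \<Rightarrow> complex \<Rightarrow> complex \<Rightarrow> complex \<Rightarrow> complex \<Rightarrow> complex \<Rightarrow> complex"
  where "poly_qde q qN a qa1 qa2 H1 H2 L1 L2 E t pm p0 pp =
    qa1 / a * H1 * H2 * (1 - t / (q * L1)) * (1 - t / (q * L2)) * pm
    + q * qa2 * L1 * L2 * (1 - a * t / H1) * (1 - a * t / H2) * pp
    - (q * qa2 * L1 * L2 * (1 + qN * a) + t\<^sup>2 * (qa1 + a * qa2 / q) + E * t) * p0"

lemma poly_qde_expanded:
  fixes q qN a qa1 qa2 H1 H2 L1 L2 E t pm p0 pp :: complex
  assumes nz: "q \<noteq> 0" "qN \<noteq> 0" "a \<noteq> 0" "qa1 \<noteq> 0" "H1 \<noteq> 0" "H2 \<noteq> 0" "L1 \<noteq> 0" "L2 \<noteq> 0"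
    and rel: "qa2 = H1 * H2 * qa1 / (q * qN * a\<^sup>2 * L1 * L2)"
  defines "A \<equiv> q * qN * a * qa2 / qa1" and "B \<equiv> qN * q\<^sup>2"
  shows "poly_qde q qN a qa1 qa2 H1 H2 L1 L2 E t pm p0 pp
    = q * qa2 * L1 * L2 * (pp - (1 + qN * a) * p0 + qN * a * pm) - E * t * p0
      - t * (q * qN * a * qa2 * (L1 + L2) / q * pm + qa1 * (H1 + H2) / (a * q * qN) * q * pp)
      + t\<^sup>2 * (qa1 / (qN * q\<^sup>2)) * (q\<^sup>2 * pp - (A + B) * p0 + A * B / q\<^sup>2 * pm)"
  unfolding poly_qde_def A_def B_def rel using nz by (simp add: field_simps power2_eq_square)

lemma poly_qde_swap:
  "poly_qde q qN a qa1 qa2 H2 H1 L2 L1 E t pm p0 pp = poly_qde q qN a qa1 qa2 H1 H2 L1 L2 E t pm p0 pp"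
  unfolding poly_qde_def by (simp add: ac_simps)

section \<open>Telescoping of the Jackson sums\<close>

text \<open>The boundary terms \<open>B(t)\<close> for the lattices \<open>t = q L1 q^n\<close> and \<open>t = (q x / a) q^n\<close>; each vanishes
  at the start of its lattice.\<close>
definition fixed_boundary :: "complex \<Rightarrow> complex \<Rightarrow> complex \<Rightarrow> complex \<Rightarrow> complex \<Rightarrow> complex \<Rightarrow> complex
    \<Rightarrow> complex \<Rightarrow> complex \<Rightarrow> complex \<Rightarrow> complex \<Rightarrow> complex \<Rightarrow> complex \<Rightarrow> complex"
  where "fixed_boundary q a qa1 qa2 H1 H2 L1 L2 x V t pm p0 =
    V * (1 - t / (q * L1)) * (1 - t / (q * L2))
      * (q * qa2 * L1 * L2 * ((1 - a * t / (q * x)) / (1 - t / (q * x))) * p0 - qa1 / a * H1 * H2 * pm)"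

lemma fixed_lattice_p0_identity:
  fixes q qN a qa1 qa2 H1 H2 L1 L2 t x :: complex
  assumes nz: "q \<noteq> 0" "qN \<noteq> 0" "a \<noteq> 0" "H1 \<noteq> 0" "H2 \<noteq> 0" "L1 \<noteq> 0" "L2 \<noteq> 0" "x \<noteq> 0"
    and nz_t: "1 - a * t / x \<noteq> 0" "1 - t / (q * x) \<noteq> 0"
    and rel: "qa2 = H1 * H2 * qa1 / (q * qN * a\<^sup>2 * L1 * L2)"
  shows "t * ((x - H1) * (x - H2) / x * qa1 * ((1 - t / x) / (1 - a * t / x))
      + (x - L1) * (x - L2) / x * qa2 * ((1 - a * t / (q * x)) / (1 - t / (q * x)))
      - ((qa1 + qa2) * x + qa1 / a * H1 * H2 * (1 + 1 / (q * qN)) / x))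
    = q * qa2 * L1 * L2 * ((1 - t / (q * L1)) * (1 - t / (q * L2))) * ((1 - a * t / (q * x)) / (1 - t / (q * x)))
      + qa1 / a * H1 * H2 * ((1 - a * t / H1) * (1 - a * t / H2)) * ((1 - t / x) / (1 - a * t / x))
      - (q * qa2 * L1 * L2 * (1 + qN * a) + t\<^sup>2 * (qa1 + a * qa2 / q))"
proof -
  define rm where "rm = (1 - t / x) / (1 - a * t / x)"
  define rp where "rp = (1 - a * t / (q * x)) / (1 - t / (q * x))"
  define al where "al = q * qa2 * L1 * L2"
  define be where "be = qa1 / a * H1 * H2"
  define cm where "cm = (x - H1) * (x - H2) / x"
  define cp where "cp = (x - L1) * (x - L2) / x"
  define c0 where "c0 = (qa1 + qa2) * x + qa1 / a * H1 * H2 * (1 + 1 / (q * qN)) / x"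
  define Fm where "Fm = (1 - a * t / H1) * (1 - a * t / H2)"
  define Gp where "Gp = (1 - t / (q * L1)) * (1 - t / (q * L2))"
  define K where "K = q * qa2 * L1 * L2 * (1 + qN * a) + t\<^sup>2 * (qa1 + a * qa2 / q)"
  define R1 where "R1 = qa1 * (x - t) * (x * t - H1 * H2 / a) / x"
  define R2 where "R2 = qa2 * (x * t - q * L1 * L2) * (1 - a * t / (q * x))"
  text \<open>Partial fractions: the poles of \<open>rm\<close> and \<open>rp\<close> cancel.\<close>
  have "t * (cm * qa1) - be * Fm = qa1 * (x - a * t) * (x * t - H1 * H2 / a) / x"
    unfolding cm_def be_def Fm_def using nz by (simp add: field_simps)
  moreover have "(x - a * t) * rm = x - t"
    unfolding rm_def using nz nz_t by (simp add: field_simps)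
  ultimately have rm_part: "t * (cm * qa1) * rm - be * Fm * rm = R1"
    unfolding R1_def by (metis (no_types, lifting) left_diff_distrib mult.commute mult.left_commute times_divide_eq_left)
  have "t * (cp * qa2) - al * Gp = qa2 * (1 - t / (q * x)) * (x * t - q * L1 * L2)"
    unfolding cp_def al_def Gp_def using nz by (simp add: field_simps)
  moreover have "(1 - t / (q * x)) * rp = 1 - a * t / (q * x)"
    unfolding rp_def using nz_t by simp
  ultimately have rp_part: "t * (cp * qa2) * rp - al * Gp * rp = R2"
    unfolding R2_def by (metis (no_types, lifting) left_diff_distrib mult.commute mult.left_commute)
  have poly_part: "R1 + R2 - t * c0 = - K"
    unfolding R1_def R2_def c0_def K_def rel using nz by (simp add: field_simps power2_eq_square)
  have "t * (cm * qa1 * rm + cp * qa2 * rp - c0)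
      = (t * (cm * qa1) * rm - be * Fm * rm) + (t * (cp * qa2) * rp - al * Gp * rp) - t * c0
        + al * Gp * rp + be * Fm * rm"
    by (simp add: algebra_simps)
  also have "\<dots> = al * Gp * rp + be * Fm * rm - K"
    unfolding rm_part rp_part poly_part by simp
  finally show ?thesis
    unfolding cm_def rm_def cp_def rp_def c0_def al_def Gp_def be_def Fm_def K_def .
qed

lemma fixed_lattice_step:
  fixes q qN a qa1 qa2 H1 H2 L1 L2 E t x pm p0 pp V0 Vm Vp V1 :: complex
  assumes nz: "q \<noteq> 0" "qN \<noteq> 0" "a \<noteq> 0" "H1 \<noteq> 0" "H2 \<noteq> 0" "L1 \<noteq> 0" "L2 \<noteq> 0" "x \<noteq> 0"
    and nz_t: "1 - t / L1 \<noteq> 0" "1 - t / L2 \<noteq> 0" "1 - a * t / x \<noteq> 0" "1 - t / (q * x) \<noteq> 0" "1 - t / x \<noteq> 0"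
    and rel: "qa2 = H1 * H2 * qa1 / (q * qN * a\<^sup>2 * L1 * L2)"
    and Vm: "Vm * (1 - a * t / x) = V0 * (1 - t / x)"
    and Vp: "Vp * (1 - t / (q * x)) = V0 * (1 - a * t / (q * x))"
    and V1: "V1 * ((1 - t / L1) * (1 - t / L2) * (1 - a * t / x))
      = V0 * ((1 - a * t / H1) * (1 - a * t / H2) * (1 - t / x))"
    and qde: "poly_qde q qN a qa1 qa2 H1 H2 L1 L2 E t pm p0 pp = 0"
  shows "(x - H1) * (x - H2) / x * qa1 * Vm * t * p0 + (x - L1) * (x - L2) / x * qa2 * Vp * t * p0
      - ((qa1 + qa2) * x + qa1 / a * H1 * H2 * (1 + 1 / (q * qN)) / x + E) * V0 * t * p0
    = fixed_boundary q a qa1 qa2 H1 H2 L1 L2 x V0 t pm p0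
      - fixed_boundary q a qa1 qa2 H1 H2 L1 L2 x V1 (q * t) p0 pp"
proof -
  define rm where "rm = (1 - t / x) / (1 - a * t / x)"
  define rp where "rp = (1 - a * t / (q * x)) / (1 - t / (q * x))"
  define al where "al = q * qa2 * L1 * L2"
  define be where "be = qa1 / a * H1 * H2"
  define cm where "cm = (x - H1) * (x - H2) / x"
  define cp where "cp = (x - L1) * (x - L2) / x"
  define c0 where "c0 = (qa1 + qa2) * x + qa1 / a * H1 * H2 * (1 + 1 / (q * qN)) / x"
  define Fm where "Fm = (1 - a * t / H1) * (1 - a * t / H2)"
  define Gp where "Gp = (1 - t / (q * L1)) * (1 - t / (q * L2))"
  define K where "K = q * qa2 * L1 * L2 * (1 + qN * a) + t\<^sup>2 * (qa1 + a * qa2 / q)"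
  have Vm_eq: "Vm = V0 * rm" and Vp_eq: "Vp = V0 * rp"
    unfolding rm_def rp_def using Vm Vp nz_t by (simp_all add: eq_divide_eq)
  have "V1 * ((1 - t / L1) * (1 - t / L2))
      = V1 * ((1 - t / L1) * (1 - t / L2) * (1 - a * t / x)) / (1 - a * t / x)"
    by (metis nz_t(3) nonzero_mult_div_cancel_right mult.assoc)
  then have V1_eq: "V1 * ((1 - t / L1) * (1 - t / L2)) = V0 * Fm * rm"
    unfolding V1 rm_def Fm_def by simp
  have rm_inv: "rm * ((1 - a * t / x) / (1 - t / x)) = 1"
    unfolding rm_def using nz_t by simp
  have p0_coeff: "t * (cm * qa1 * rm + cp * qa2 * rp - c0) = al * Gp * rp + be * Fm * rm - K"
    unfolding cm_def rm_def cp_def rp_def c0_def al_def Gp_def be_def Fm_def K_def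
    by (rule fixed_lattice_p0_identity[OF nz nz_t(3,4) rel])
  have shifted: "q * t / (q * L1) = t / L1" "q * t / (q * L2) = t / L2" "a * (q * t) / (q * x) = a * t / x"
    "q * t / (q * x) = t / x"
    using nz by simp_all
  have "fixed_boundary q a qa1 qa2 H1 H2 L1 L2 x V1 (q * t) p0 pp
      = V1 * ((1 - t / L1) * (1 - t / L2)) * (al * ((1 - a * t / x) / (1 - t / x)) * pp - be * p0)"
    unfolding fixed_boundary_def shifted al_def be_def by (simp add: mult_ac)
  also have "\<dots> = V0 * Fm * (al * pp * (rm * ((1 - a * t / x) / (1 - t / x))) - be * rm * p0)"
    unfolding V1_eq by (simp add: algebra_simps)
  finally have boundary1: "fixed_boundary q a qa1 qa2 H1 H2 L1 L2 x V1 (q * t) p0 pp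
      = V0 * Fm * (al * pp - be * rm * p0)"
    unfolding rm_inv by simp
  have boundary0: "fixed_boundary q a qa1 qa2 H1 H2 L1 L2 x V0 t pm p0 = V0 * Gp * (al * rp * p0 - be * pm)"
    unfolding fixed_boundary_def rp_def al_def be_def Gp_def by (simp add: mult_ac)
  have "poly_qde q qN a qa1 qa2 H1 H2 L1 L2 E t pm p0 pp = be * Gp * pm + al * Fm * pp - (K + E * t) * p0"
    unfolding poly_qde_def al_def be_def Fm_def Gp_def K_def by (simp add: mult_ac)
  with qde have qde': "be * Gp * pm + al * Fm * pp - (K + E * t) * p0 = 0" by simp
  have "cm * qa1 * Vm * t * p0 + cp * qa2 * Vp * t * p0 - (c0 + E) * V0 * t * p0
      - (V0 * Gp * (al * rp * p0 - be * pm) - V0 * Fm * (al * pp - be * rm * p0))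
      = V0 * p0 * (t * (cm * qa1 * rm + cp * qa2 * rp - c0) - (al * Gp * rp + be * Fm * rm - K))
        + V0 * (be * Gp * pm + al * Fm * pp - (K + E * t) * p0)"
    unfolding Vm_eq Vp_eq by (simp add: algebra_simps)
  also have "\<dots> = 0"
    unfolding p0_coeff qde' by simp
  finally show ?thesis
    unfolding boundary0 boundary1 cm_def[symmetric] cp_def[symmetric] c0_def[symmetric] by simp
qed

definition moving_boundary :: "complex \<Rightarrow> complex \<Rightarrow> complex \<Rightarrow> complex \<Rightarrow> complex \<Rightarrow> complex \<Rightarrow> complex
    \<Rightarrow> complex \<Rightarrow> complex \<Rightarrow> complex \<Rightarrow> complex \<Rightarrow> complex \<Rightarrow> complex \<Rightarrow> complex"
  where "moving_boundary q a qa1 qa2 H1 H2 L1 L2 x V t pm p0 =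
    V * (1 - a * t / (q * x)) * (qa2 * (q * L1 * L2 - x * t) * p0 + qa1 * (x * t / q - H1 * H2 / a)
      * ((1 - t / (q * L1)) * (1 - t / (q * L2)) / ((1 - a * t / (q * H1)) * (1 - a * t / (q * H2)))) * pm)"

lemma moving_lattice_coefficient_identities:
  fixes q qN a qa1 qa2 H1 H2 L1 L2 t x :: complex
  assumes nz: "q \<noteq> 0" "qN \<noteq> 0" "a \<noteq> 0" "H1 \<noteq> 0" "H2 \<noteq> 0" "L1 \<noteq> 0" "L2 \<noteq> 0" "x \<noteq> 0"
    and rel: "qa2 = H1 * H2 * qa1 / (q * qN * a\<^sup>2 * L1 * L2)"
  shows "(x - H1) * (x - H2) / x * qa1 * (t / q) - (1 - a * t / (q * x)) * (qa1 * (x * t / q - H1 * H2 / a))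
      = qa1 / a * H1 * H2 * ((1 - a * t / (q * H1)) * (1 - a * t / (q * H2)))"
    and "(x - L1) * (x - L2) / x * qa2 * (q * t) + (1 - t / x) * (qa2 * (q * L1 * L2 - x * (q * t)))
      = q * qa2 * L1 * L2 * ((1 - t / L1) * (1 - t / L2))"
    and "- ((qa1 + qa2) * x + qa1 / a * H1 * H2 * (1 + 1 / (q * qN)) / x) * t
        - (1 - a * t / (q * x)) * qa2 * (q * L1 * L2 - x * t) + (1 - t / x) * qa1 * (x * t - H1 * H2 / a)
      = - (q * qa2 * L1 * L2 * (1 + qN * a) + t\<^sup>2 * (qa1 + a * qa2 / q))"
proof -
  show "(x - H1) * (x - H2) / x * qa1 * (t / q) - (1 - a * t / (q * x)) * (qa1 * (x * t / q - H1 * H2 / a))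
      = qa1 / a * H1 * H2 * ((1 - a * t / (q * H1)) * (1 - a * t / (q * H2)))"
    using nz by (simp add: field_simps)
  show "(x - L1) * (x - L2) / x * qa2 * (q * t) + (1 - t / x) * (qa2 * (q * L1 * L2 - x * (q * t)))
      = q * qa2 * L1 * L2 * ((1 - t / L1) * (1 - t / L2))"
    using nz by (simp add: field_simps)
  show "- ((qa1 + qa2) * x + qa1 / a * H1 * H2 * (1 + 1 / (q * qN)) / x) * t
        - (1 - a * t / (q * x)) * qa2 * (q * L1 * L2 - x * t) + (1 - t / x) * qa1 * (x * t - H1 * H2 / a)
      = - (q * qa2 * L1 * L2 * (1 + qN * a) + t\<^sup>2 * (qa1 + a * qa2 / q))"
    unfolding rel using nz by (simp add: field_simps power2_eq_square)
qed

lemma moving_lattice_step: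
  fixes q qN a qa1 qa2 H1 H2 L1 L2 E t x pm p0 pp V0 Vm Vp V1 :: complex
  assumes nz: "q \<noteq> 0" "qN \<noteq> 0" "a \<noteq> 0" "H1 \<noteq> 0" "H2 \<noteq> 0" "L1 \<noteq> 0" "L2 \<noteq> 0" "x \<noteq> 0"
    and nz_t: "1 - t / L1 \<noteq> 0" "1 - t / L2 \<noteq> 0" "1 - a * t / x \<noteq> 0" "1 - a * t / H1 \<noteq> 0"
      "1 - a * t / H2 \<noteq> 0" "1 - a * t / (q * H1) \<noteq> 0" "1 - a * t / (q * H2) \<noteq> 0"
    and rel: "qa2 = H1 * H2 * qa1 / (q * qN * a\<^sup>2 * L1 * L2)"
    and Vm: "Vm * ((1 - a * t / (q * H1)) * (1 - a * t / (q * H2))) = V0 * ((1 - t / (q * L1)) * (1 - t / (q * L2)))"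
    and Vp: "Vp * ((1 - t / L1) * (1 - t / L2)) = V0 * ((1 - a * t / H1) * (1 - a * t / H2))"
    and V1: "V1 * ((1 - t / L1) * (1 - t / L2) * (1 - a * t / x))
      = V0 * ((1 - a * t / H1) * (1 - a * t / H2) * (1 - t / x))"
    and qde: "poly_qde q qN a qa1 qa2 H1 H2 L1 L2 E t pm p0 pp = 0"
  shows "(x - H1) * (x - H2) / x * qa1 * Vm * (t / q) * pm + (x - L1) * (x - L2) / x * qa2 * Vp * (q * t) * pp
      - ((qa1 + qa2) * x + qa1 / a * H1 * H2 * (1 + 1 / (q * qN)) / x + E) * V0 * t * p0
    = moving_boundary q a qa1 qa2 H1 H2 L1 L2 x V0 t pm p0
      - moving_boundary q a qa1 qa2 H1 H2 L1 L2 x V1 (q * t) p0 pp"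
proof -
  define al where "al = q * qa2 * L1 * L2"
  define be where "be = qa1 / a * H1 * H2"
  define cm where "cm = (x - H1) * (x - H2) / x"
  define cp where "cp = (x - L1) * (x - L2) / x"
  define c0 where "c0 = (qa1 + qa2) * x + qa1 / a * H1 * H2 * (1 + 1 / (q * qN)) / x"
  define Fm where "Fm = (1 - a * t / H1) * (1 - a * t / H2)"
  define Fm' where "Fm' = (1 - a * t / (q * H1)) * (1 - a * t / (q * H2))"
  define Gp where "Gp = (1 - t / (q * L1)) * (1 - t / (q * L2))"
  define Lp where "Lp = (1 - t / L1) * (1 - t / L2)"
  define K where "K = q * qa2 * L1 * L2 * (1 + qN * a) + t\<^sup>2 * (qa1 + a * qa2 / q)"
  define W0 where "W0 = 1 - a * t / (q * x)"
  define U0 where "U0 = W0 * qa2 * (q * L1 * L2 - x * t)"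
  define U1 where "U1 = (1 - t / x) * qa1 * (x * t - H1 * H2 / a)"
  have Fm_Lp: "Fm \<noteq> 0" "Lp \<noteq> 0" "Fm' \<noteq> 0"
    unfolding Fm_def Lp_def Fm'_def using nz_t by simp_all
  have Vm_eq: "Vm = V0 * (Gp / Fm')" and Vp_eq: "Vp = V0 * (Fm / Lp)"
    unfolding Fm'_def Gp_def Fm_def Lp_def using Vm Vp nz_t by (simp_all add: eq_divide_eq)
  have "V1 * (1 - a * t / x) = V1 * (Lp * (1 - a * t / x)) / Lp"
    using Fm_Lp by simp
  then have V1_eq: "V1 * (1 - a * t / x) = V0 * (Fm / Lp) * (1 - t / x)"
    unfolding Lp_def V1 Fm_def by simp
  have pm_coeff: "cm * qa1 * (t / q) - W0 * (qa1 * (x * t / q - H1 * H2 / a)) = be * Fm'"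
    and pp_coeff: "cp * qa2 * (q * t) + (1 - t / x) * (qa2 * (q * L1 * L2 - x * (q * t))) = al * Lp"
    and p0_coeff: "- c0 * t - U0 + U1 = - K"
    unfolding cm_def be_def Fm'_def W0_def cp_def al_def Lp_def c0_def U0_def U1_def K_def
    by (fact moving_lattice_coefficient_identities[OF nz rel])+
  have shifted: "a * (q * t) / (q * x) = a * t / x" "x * (q * t) / q = x * t" "q * t / (q * L1) = t / L1"
    "q * t / (q * L2) = t / L2" "a * (q * t) / (q * H1) = a * t / H1" "a * (q * t) / (q * H2) = a * t / H2"
    using nz by simp_all
  have "moving_boundary q a qa1 qa2 H1 H2 L1 L2 x V1 (q * t) p0 pp
      = V1 * (1 - a * t / x) * (qa2 * (q * L1 * L2 - x * (q * t)) * pp + qa1 * (x * t - H1 * H2 / a) * (Lp / Fm) * p0)"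
    unfolding moving_boundary_def shifted Lp_def Fm_def ..
  also have "\<dots> = V0 * ((1 - t / x) * (qa2 * (q * L1 * L2 - x * (q * t))) * (Fm / Lp) * pp + U1 * p0)"
    unfolding V1_eq U1_def using Fm_Lp by (simp add: field_simps)
  finally have boundary1: "moving_boundary q a qa1 qa2 H1 H2 L1 L2 x V1 (q * t) p0 pp
      = V0 * ((1 - t / x) * (qa2 * (q * L1 * L2 - x * (q * t))) * (Fm / Lp) * pp + U1 * p0)" .
  have boundary0: "moving_boundary q a qa1 qa2 H1 H2 L1 L2 x V0 t pm p0
      = V0 * W0 * (qa2 * (q * L1 * L2 - x * t) * p0 + qa1 * (x * t / q - H1 * H2 / a) * (Gp / Fm') * pm)"
    unfolding moving_boundary_def W0_def Gp_def Fm'_def ..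
  have "poly_qde q qN a qa1 qa2 H1 H2 L1 L2 E t pm p0 pp = be * Gp * pm + al * Fm * pp - (K + E * t) * p0"
    unfolding poly_qde_def al_def be_def Fm_def Gp_def K_def by (simp add: mult_ac)
  with qde have qde': "be * Gp * pm + al * Fm * pp - (K + E * t) * p0 = 0" by simp
  have "cm * qa1 * Vm * (t / q) * pm + cp * qa2 * Vp * (q * t) * pp - (c0 + E) * V0 * t * p0
      - (V0 * W0 * (qa2 * (q * L1 * L2 - x * t) * p0 + qa1 * (x * t / q - H1 * H2 / a) * (Gp / Fm') * pm)
         - V0 * ((1 - t / x) * (qa2 * (q * L1 * L2 - x * (q * t))) * (Fm / Lp) * pp + U1 * p0))
      = V0 * (Gp / Fm') * pm * (cm * qa1 * (t / q) - W0 * (qa1 * (x * t / q - H1 * H2 / a)))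
        + V0 * (Fm / Lp) * pp * (cp * qa2 * (q * t) + (1 - t / x) * (qa2 * (q * L1 * L2 - x * (q * t))))
        + V0 * p0 * (- c0 * t - U0 + U1) - V0 * E * t * p0"
    unfolding Vm_eq Vp_eq U0_def by (simp add: algebra_simps)
  also have "\<dots> = V0 * (be * Gp * pm + al * Fm * pp - (K + E * t) * p0)"
    unfolding pm_coeff pp_coeff p0_coeff using Fm_Lp by (simp add: field_simps)
  also have "\<dots> = 0"
    unfolding qde' by simp
  finally show ?thesis
    unfolding boundary0 boundary1 cm_def[symmetric] cp_def[symmetric] c0_def[symmetric] by simp
qed

lemma telescoping_jackson_identity:
  fixes um u0 up B :: "nat \<Rightarrow> complex"
  assumes sums: "(\<lambda>n. (1 - q) * (qa1 * xa) * um n) sums gm" "(\<lambda>n. (1 - q) * xa * u0 n) sums g0"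
      "(\<lambda>n. (1 - q) * (xa / qa1) * up n) sums gp"
    and qa1: "qa1 \<noteq> 0"
    and step: "\<And>n. cm * qa1 * um n + cp * qa2 * up n - (c0 + E) * u0 n = B n - B (Suc n)"
    and B: "B \<longlonglongrightarrow> l" "B 0 = 0"
  shows "cm * gm + qa1 * qa2 * cp * gp - c0 * g0 = E * g0 - (1 - q) * xa * l"
proof -
  have "(\<lambda>n. cm * ((1 - q) * (qa1 * xa) * um n) + qa1 * qa2 * cp * ((1 - q) * (xa / qa1) * up n)
      - (c0 + E) * ((1 - q) * xa * u0 n)) sums (cm * gm + qa1 * qa2 * cp * gp - (c0 + E) * g0)"
    by (intro sums_add sums_diff sums_mult sums)
  moreover have "cm * ((1 - q) * (qa1 * xa) * um n) + qa1 * qa2 * cp * ((1 - q) * (xa / qa1) * up n)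
      - (c0 + E) * ((1 - q) * xa * u0 n) = (1 - q) * xa * (B n - B (Suc n))" for n
    unfolding step[symmetric] using qa1 by (simp add: field_simps)
  moreover have "(\<lambda>n. (1 - q) * xa * (B n - B (Suc n))) sums ((1 - q) * xa * (B 0 - l))"
    by (intro sums_mult telescope_sums' B)
  ultimately have "cm * gm + qa1 * qa2 * cp * gp - (c0 + E) * g0 = (1 - q) * xa * (B 0 - l)"
    using sums_unique2 by simp
  then show ?thesis using B(2) by (simp add: algebra_simps)
qed

lemma fixed_boundary_tendsto:
  assumes lim: "V \<longlonglongrightarrow> 1" "t \<longlonglongrightarrow> 0" "(\<lambda>n. P (t n / q)) \<longlonglongrightarrow> 1" "(\<lambda>n. P (t n)) \<longlonglongrightarrow> 1"
    and nz: "q \<noteq> 0" "x \<noteq> 0" "L1 \<noteq> 0" "L2 \<noteq> 0"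
  shows "(\<lambda>n. fixed_boundary q a qa1 qa2 H1 H2 L1 L2 x (V n) (t n) (P (t n / q)) (P (t n)))
    \<longlonglongrightarrow> q * qa2 * L1 * L2 - qa1 / a * H1 * H2"
proof -
  have "(\<lambda>n. fixed_boundary q a qa1 qa2 H1 H2 L1 L2 x (V n) (t n) (P (t n / q)) (P (t n)))
    \<longlonglongrightarrow> 1 * (1 - 0 / (q * L1)) * (1 - 0 / (q * L2))
      * (q * qa2 * L1 * L2 * ((1 - a * 0 / (q * x)) / (1 - 0 / (q * x))) * 1 - qa1 / a * H1 * H2 * 1)"
    unfolding fixed_boundary_def by (intro tendsto_intros lim) (use nz in auto)
  then show ?thesis by simp
qed

lemma fixed_lattice_jackson_step:
  fixes q a qa1 qa2 H1 H2 L1 L2 qN x E S :: complex and P :: "complex \<Rightarrow> complex" and n :: nat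
  assumes q: "norm q < 1" "q \<noteq> 0"
    and nz: "qN \<noteq> 0" "a \<noteq> 0" "H1 \<noteq> 0" "H2 \<noteq> 0" "L1 \<noteq> 0" "L2 \<noteq> 0" "x \<noteq> 0"
    and rel: "qa2 = H1 * H2 * qa1 / (q * qN * a\<^sup>2 * L1 * L2)"
    and qde: "\<And>t. poly_qde q qN a qa1 qa2 H1 H2 L1 L2 E t (P (t / q)) (P t) (P (q * t)) = 0"
    and S: "S = q * L1"
    and nd: "nondeg q (a * S / H1)" "nondeg q (a * S / H2)" "nondeg q (S / x)" "nondeg q (S / L2)"
      "nondeg q (a * S / x)" "nondeg q (S / x * q)" "nondeg q (S / x / q)"
  defines "V \<equiv> \<lambda>b d. tail_ratio q (a * S / H1) (a * S / H2) b (S / L2) d"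
  shows "(x - H1) * (x - H2) / x * qa1 * (V (S / x * q) (a * S / x * q) n * (S * q ^ n) * P (S * q ^ n))
      + (x - L1) * (x - L2) / x * qa2 * (V (S / x / q) (a * S / x / q) n * (S * q ^ n) * P (S * q ^ n))
      - ((qa1 + qa2) * x + qa1 / a * H1 * H2 * (1 + 1 / (q * qN)) / x + E)
        * (V (S / x) (a * S / x) n * (S * q ^ n) * P (S * q ^ n))
    = fixed_boundary q a qa1 qa2 H1 H2 L1 L2 x (V (S / x) (a * S / x) n) (S * q ^ n)
        (P (S * q ^ n / q)) (P (S * q ^ n))
      - fixed_boundary q a qa1 qa2 H1 H2 L1 L2 x (V (S / x) (a * S / x) (Suc n)) (S * q ^ Suc n)
        (P (S * q ^ Suc n / q)) (P (S * q ^ Suc n))"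
proof -
  define B1 where "B1 = a * S / H1"
  define B2 where "B2 = a * S / H2"
  define B3 where "B3 = S / x"
  define D1 where "D1 = S / L2"
  define D2 where "D2 = a * S / x"
  define t where "t = S * q ^ n"
  note nd' = nd[folded B1_def B2_def B3_def D1_def D2_def]
  have at_t: "D2 * q ^ n = a * t / x" "B3 * q ^ n = t / x" "D2 / q * q ^ n = a * t / (q * x)"
    "B3 / q * q ^ n = t / (q * x)" "q * q ^ n = t / L1" "D1 * q ^ n = t / L2"
    "B1 * q ^ n = a * t / H1" "B2 * q ^ n = a * t / H2"
    unfolding t_def B1_def B2_def B3_def D1_def D2_def S using q(2) nz by (auto simp: field_simps)
  have Vm_rel: "tail_ratio q B1 B2 (B3 * q) D1 (D2 * q) n * (1 - a * t / x)
      = tail_ratio q B1 B2 B3 D1 D2 n * (1 - t / x)"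
    using tail_ratio_shift_b3_d2[OF q(1) nd'(1,2,3,6) refl refl, of D1 D2 n] unfolding at_t .
  have "tail_ratio q B1 B2 B3 D1 D2 n * (1 - a * t / (q * x))
      = tail_ratio q B1 B2 (B3 / q) D1 (D2 / q) n * (1 - t / (q * x))"
    using tail_ratio_shift_b3_d2[OF q(1) nd'(1,2,7,3), of D2 "D2 / q" D1 n] q(2) unfolding at_t by simp
  then have Vp_rel: "tail_ratio q B1 B2 (B3 / q) D1 (D2 / q) n * (1 - t / (q * x))
      = tail_ratio q B1 B2 B3 D1 D2 n * (1 - a * t / (q * x))" ..
  have V_Suc: "tail_ratio q B1 B2 B3 D1 D2 (Suc n) * ((1 - t / L1) * (1 - t / L2) * (1 - a * t / x))
      = tail_ratio q B1 B2 B3 D1 D2 n * ((1 - a * t / H1) * (1 - a * t / H2) * (1 - t / x))"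
    using tail_ratio_Suc[OF q(1) nd'(1,2,3), of D1 D2 n] unfolding at_t .
  have nz_t: "1 - t / L1 \<noteq> 0" "1 - t / L2 \<noteq> 0" "1 - a * t / x \<noteq> 0" "1 - t / (q * x) \<noteq> 0"
    "1 - t / x \<noteq> 0"
    using nondeg_factor_nonzero[OF nondeg_self[OF q(1)], of n] nondeg_factor_nonzero[OF nd'(4), of n]
      nondeg_factor_nonzero[OF nd'(5), of n] nondeg_factor_nonzero[OF nd'(7), of n]
      nondeg_factor_nonzero[OF nd'(3), of n]
    unfolding at_t by auto
  have t_Suc: "S * q ^ Suc n = q * t" "q * t / q = t"
    unfolding t_def using q(2) by auto
  from fixed_lattice_step[OF q(2) nz nz_t rel Vm_rel Vp_rel V_Suc qde]
  show ?thesis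
    unfolding V_def B1_def[symmetric] B2_def[symmetric] B3_def[symmetric] D1_def[symmetric]
      D2_def[symmetric] t_def[symmetric] t_Suc
    by (simp only: mult.assoc)
qed

lemma fixed_lattice_jackson_equation:
  fixes q a qa1 qa2 H1 H2 L1 L2 qN x E xa S :: complex and C :: "nat \<Rightarrow> complex" and N :: nat
  assumes q: "norm q < 1" "q \<noteq> 0"
    and nz: "qN \<noteq> 0" "a \<noteq> 0" "qa1 \<noteq> 0" "H1 \<noteq> 0" "H2 \<noteq> 0" "L1 \<noteq> 0" "L2 \<noteq> 0" "x \<noteq> 0"
    and rel: "qa2 = H1 * H2 * qa1 / (q * qN * a\<^sup>2 * L1 * L2)"
    and qde: "\<And>t. poly_qde q qN a qa1 qa2 H1 H2 L1 L2 E t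
      (coeff_poly C N (t / q)) (coeff_poly C N t) (coeff_poly C N (q * t)) = 0"
    and C0: "C 0 = 1"
    and S: "S = q * L1"
    and nd: "nondeg q (a * S / H1)" "nondeg q (a * S / H2)" "nondeg q (S / L2)"
      "\<forall>y\<in>{x / q, x, q * x}. nondeg q (S / y) \<and> nondeg q (a * S / y)"
  shows "(x - H1) * (x - H2) / x
         * gshape q (qa1 * xa) (a * S / H1) (a * S / H2) (S / (x / q)) (S / L2) (a * S / (x / q)) S C N
       + qa1 * qa2 * ((x - L1) * (x - L2) / x)
         * gshape q (xa / qa1) (a * S / H1) (a * S / H2) (S / (q * x)) (S / L2) (a * S / (q * x)) S C N
       - ((qa1 + qa2) * x + qa1 / a * H1 * H2 * (1 + 1 / (q * qN)) / x)
         * gshape q xa (a * S / H1) (a * S / H2) (S / x) (S / L2) (a * S / x) S C N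
     = E * gshape q xa (a * S / H1) (a * S / H2) (S / x) (S / L2) (a * S / x) S C N
       - (1 - q) * xa * (q * qa2 * L1 * L2 - qa1 / a * H1 * H2)"
proof -
  define V where "V = (\<lambda>b d. tail_ratio q (a * S / H1) (a * S / H2) b (S / L2) d)"
  define P where "P = coeff_poly C N"
  define Bd where "Bd n = fixed_boundary q a qa1 qa2 H1 H2 L1 L2 x (V (S / x) (a * S / x) n) (S * q ^ n)
    (P (S * q ^ n / q)) (P (S * q ^ n))" for n
  have shifted: "S / (x / q) = S / x * q" "a * S / (x / q) = a * S / x * q" "S / (q * x) = S / x / q"
    "a * S / (q * x) = a * S / x / q"
    by (simp_all add: field_simps)
  have nd': "nondeg q (a * S / H1)" "nondeg q (a * S / H2)" "nondeg q (S / x)" "nondeg q (S / L2)"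
    "nondeg q (a * S / x)" "nondeg q (S / x * q)" "nondeg q (a * S / x * q)" "nondeg q (S / x / q)"
    "nondeg q (a * S / x / q)"
    using nd unfolding shifted[symmetric] by auto
  have step: "(x - H1) * (x - H2) / x * qa1 * (V (S / x * q) (a * S / x * q) n * (S * q ^ n) * P (S * q ^ n))
      + (x - L1) * (x - L2) / x * qa2 * (V (S / x / q) (a * S / x / q) n * (S * q ^ n) * P (S * q ^ n))
      - ((qa1 + qa2) * x + qa1 / a * H1 * H2 * (1 + 1 / (q * qN)) / x + E)
        * (V (S / x) (a * S / x) n * (S * q ^ n) * P (S * q ^ n))
      = Bd n - Bd (Suc n)" for n
    unfolding Bd_def V_def P_def
    by (rule fixed_lattice_jackson_step[OF q nz(1,2,4-8) rel qde S nd'(1-6,8)])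
  have S_lim: "(\<lambda>n. S * q ^ n) \<longlonglongrightarrow> 0"
    using q(1) by (intro tendsto_mult_right_zero LIMSEQ_power_zero) simp
  then have "(\<lambda>n. S * q ^ n / q) \<longlonglongrightarrow> 0"
    by (rule tendsto_divide_zero)
  then have P_lim: "(\<lambda>n. P (S * q ^ n / q)) \<longlonglongrightarrow> 1" "(\<lambda>n. P (S * q ^ n)) \<longlonglongrightarrow> 1"
    unfolding P_def using coeff_poly_tendsto S_lim C0 by metis+
  have Bd_lim: "Bd \<longlonglongrightarrow> q * qa2 * L1 * L2 - qa1 / a * H1 * H2"
    unfolding Bd_def
    by (rule fixed_boundary_tendsto[where t = "\<lambda>n. S * q ^ n", OF _ S_lim P_lim q(2) nz(8,6,7)])
      (unfold V_def, rule tail_ratio_tendsto_1[OF q(1) nd'(1-5)])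
  have Bd_0: "Bd 0 = 0"
    unfolding Bd_def fixed_boundary_def S using q(2) nz by simp
  show ?thesis
    unfolding shifted
    by (rule telescoping_jackson_identity[OF _ _ _ nz(3) step Bd_lim Bd_0])
      (unfold V_def P_def, (rule gshape_jackson_sums[OF q(1)], fact+)+)
qed

lemma moving_boundary_tendsto:
  assumes lim: "V \<longlonglongrightarrow> 1" "t \<longlonglongrightarrow> 0" "(\<lambda>n. P (t n / q)) \<longlonglongrightarrow> 1" "(\<lambda>n. P (t n)) \<longlonglongrightarrow> 1"
    and nz: "q \<noteq> 0" "x \<noteq> 0" "H1 \<noteq> 0" "H2 \<noteq> 0" "L1 \<noteq> 0" "L2 \<noteq> 0"
  shows "(\<lambda>n. moving_boundary q a qa1 qa2 H1 H2 L1 L2 x (V n) (t n) (P (t n / q)) (P (t n)))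
    \<longlonglongrightarrow> q * qa2 * L1 * L2 - qa1 / a * H1 * H2"
proof -
  have "(\<lambda>n. moving_boundary q a qa1 qa2 H1 H2 L1 L2 x (V n) (t n) (P (t n / q)) (P (t n)))
    \<longlonglongrightarrow> 1 * (1 - a * 0 / (q * x)) * (qa2 * (q * L1 * L2 - x * 0) * 1
      + qa1 * (x * 0 / q - H1 * H2 / a) * ((1 - 0 / (q * L1)) * (1 - 0 / (q * L2))
        / ((1 - a * 0 / (q * H1)) * (1 - a * 0 / (q * H2)))) * 1)"
    unfolding moving_boundary_def by (intro tendsto_intros lim) (use nz in auto)
  then show ?thesis by (simp add: algebra_simps)
qed

lemma moving_lattice_jackson_step:
  fixes q a qa1 qa2 H1 H2 L1 L2 qN x E :: complex and P :: "complex \<Rightarrow> complex" and n :: nat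
  defines "S \<equiv> q / a * x" and "B2 \<equiv> q * x / H1" and "B3 \<equiv> q * x / H2"
    and "D1 \<equiv> q * x / (a * L1)" and "D2 \<equiv> q * x / (a * L2)"
  assumes q: "norm q < 1" "q \<noteq> 0"
    and nz: "qN \<noteq> 0" "a \<noteq> 0" "H1 \<noteq> 0" "H2 \<noteq> 0" "L1 \<noteq> 0" "L2 \<noteq> 0" "x \<noteq> 0"
    and rel: "qa2 = H1 * H2 * qa1 / (q * qN * a\<^sup>2 * L1 * L2)"
    and qde: "\<And>t. poly_qde q qN a qa1 qa2 H1 H2 L1 L2 E t (P (t / q)) (P t) (P (q * t)) = 0"
    and nd: "nondeg q (q / a)" "nondeg q B2" "nondeg q B3" "nondeg q D1" "nondeg q D2" "nondeg q (B2 / q)"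
      "nondeg q (B3 / q)" "nondeg q (B2 * q)" "nondeg q (B3 * q)"
  defines "V \<equiv> \<lambda>b2 b3 d1 d2. tail_ratio q (q / a) b2 b3 d1 d2"
  shows "(x - H1) * (x - H2) / x * qa1
        * (V (B2 / q) (B3 / q) (D1 / q) (D2 / q) n * (S / q * q ^ n) * P (S / q * q ^ n))
      + (x - L1) * (x - L2) / x * qa2
        * (V (B2 * q) (B3 * q) (D1 * q) (D2 * q) n * (S * q * q ^ n) * P (S * q * q ^ n))
      - ((qa1 + qa2) * x + qa1 / a * H1 * H2 * (1 + 1 / (q * qN)) / x + E)
        * (V B2 B3 D1 D2 n * (S * q ^ n) * P (S * q ^ n))
    = moving_boundary q a qa1 qa2 H1 H2 L1 L2 x (V B2 B3 D1 D2 n) (S * q ^ n) (P (S * q ^ n / q)) (P (S * q ^ n))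
      - moving_boundary q a qa1 qa2 H1 H2 L1 L2 x (V B2 B3 D1 D2 (Suc n)) (S * q ^ Suc n)
        (P (S * q ^ Suc n / q)) (P (S * q ^ Suc n))"
proof -
  define t where "t = S * q ^ n"
  have at_t: "q / a * q ^ n = t / x" "B2 * q ^ n = a * t / H1" "B3 * q ^ n = a * t / H2"
    "D1 * q ^ n = t / L1" "D2 * q ^ n = t / L2" "q * q ^ n = a * t / x"
    "B2 / q * q ^ n = a * t / (q * H1)" "B3 / q * q ^ n = a * t / (q * H2)"
    "D1 / q * q ^ n = t / (q * L1)" "D2 / q * q ^ n = t / (q * L2)"
    unfolding t_def S_def B2_def B3_def D1_def D2_def using q(2) nz by (auto simp: field_simps)
  have "V B2 B3 D1 D2 n * ((1 - t / (q * L1)) * (1 - t / (q * L2)))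
      = V (B2 / q) (B3 / q) (D1 / q) (D2 / q) n * ((1 - a * t / (q * H1)) * (1 - a * t / (q * H2)))"
    using tail_ratio_shift_b23_d12[OF q(1) nd(1,6,7,2,3), of D1 "D1 / q" D2 "D2 / q" n] q(2)
    unfolding V_def at_t by simp
  then have Vm_rel: "V (B2 / q) (B3 / q) (D1 / q) (D2 / q) n * ((1 - a * t / (q * H1)) * (1 - a * t / (q * H2)))
      = V B2 B3 D1 D2 n * ((1 - t / (q * L1)) * (1 - t / (q * L2)))" ..
  have Vp_rel: "V (B2 * q) (B3 * q) (D1 * q) (D2 * q) n * ((1 - t / L1) * (1 - t / L2))
      = V B2 B3 D1 D2 n * ((1 - a * t / H1) * (1 - a * t / H2))"
    using tail_ratio_shift_b23_d12[OF q(1) nd(1,2,3,8,9) refl refl refl refl, of D1 D2 n]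
    unfolding V_def at_t .
  have V_Suc: "V B2 B3 D1 D2 (Suc n) * ((1 - t / L1) * (1 - t / L2) * (1 - a * t / x))
      = V B2 B3 D1 D2 n * ((1 - a * t / H1) * (1 - a * t / H2) * (1 - t / x))"
    using tail_ratio_Suc[OF q(1) nd(1,2,3), of D1 D2 n] unfolding V_def at_t by (simp add: ac_simps)
  have nz_t: "1 - t / L1 \<noteq> 0" "1 - t / L2 \<noteq> 0" "1 - a * t / x \<noteq> 0" "1 - a * t / H1 \<noteq> 0"
    "1 - a * t / H2 \<noteq> 0" "1 - a * t / (q * H1) \<noteq> 0" "1 - a * t / (q * H2) \<noteq> 0"
    using nondeg_factor_nonzero[OF nd(4), of n] nondeg_factor_nonzero[OF nd(5), of n]
      nondeg_factor_nonzero[OF nondeg_self[OF q(1)], of n] nondeg_factor_nonzero[OF nd(2), of n]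
      nondeg_factor_nonzero[OF nd(3), of n] nondeg_factor_nonzero[OF nd(6), of n]
      nondeg_factor_nonzero[OF nd(7), of n]
    unfolding at_t by auto
  have lattice: "S / q * q ^ n = t / q" "S * q * q ^ n = q * t" "S * q ^ Suc n = q * t" "q * t / q = t"
    unfolding t_def using q(2) by auto
  from moving_lattice_step[OF q(2) nz nz_t rel Vm_rel Vp_rel V_Suc qde]
  show ?thesis
    unfolding t_def[symmetric] lattice by (simp only: mult.assoc)
qed

lemma moving_lattice_jackson_equation:
  fixes q a qa1 qa2 H1 H2 L1 L2 qN x E xa :: complex and C :: "nat \<Rightarrow> complex" and N :: nat
  assumes q: "norm q < 1" "q \<noteq> 0"
    and nz: "qN \<noteq> 0" "a \<noteq> 0" "qa1 \<noteq> 0" "H1 \<noteq> 0" "H2 \<noteq> 0" "L1 \<noteq> 0" "L2 \<noteq> 0" "x \<noteq> 0"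
    and rel: "qa2 = H1 * H2 * qa1 / (q * qN * a\<^sup>2 * L1 * L2)"
    and qde: "\<And>t. poly_qde q qN a qa1 qa2 H1 H2 L1 L2 E t
      (coeff_poly C N (t / q)) (coeff_poly C N t) (coeff_poly C N (q * t)) = 0"
    and C0: "C 0 = 1"
    and nd: "nondeg q (q / a)" "\<forall>y\<in>{x / q, x, q * x}. nondeg q (q * y / H1) \<and> nondeg q (q * y / H2)
      \<and> nondeg q (q * y / (a * L1)) \<and> nondeg q (q * y / (a * L2))"
  shows "(x - H1) * (x - H2) / x * gshape q (qa1 * xa) (q / a) (q * (x / q) / H1) (q * (x / q) / H2)
           (q * (x / q) / (a * L1)) (q * (x / q) / (a * L2)) (q / a * (x / q)) C N
       + qa1 * qa2 * ((x - L1) * (x - L2) / x) * gshape q (xa / qa1) (q / a) (q * (q * x) / H1)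
           (q * (q * x) / H2) (q * (q * x) / (a * L1)) (q * (q * x) / (a * L2)) (q / a * (q * x)) C N
       - ((qa1 + qa2) * x + qa1 / a * H1 * H2 * (1 + 1 / (q * qN)) / x)
         * gshape q xa (q / a) (q * x / H1) (q * x / H2) (q * x / (a * L1)) (q * x / (a * L2)) (q / a * x) C N
     = E * gshape q xa (q / a) (q * x / H1) (q * x / H2) (q * x / (a * L1)) (q * x / (a * L2)) (q / a * x) C N
       - (1 - q) * xa * (q * qa2 * L1 * L2 - qa1 / a * H1 * H2)"
proof -
  define V where "V = (\<lambda>b2 b3 d1 d2. tail_ratio q (q / a) b2 b3 d1 d2)"
  define P where "P = coeff_poly C N"
  define Bd where "Bd n = moving_boundary q a qa1 qa2 H1 H2 L1 L2 x
    (V (q * x / H1) (q * x / H2) (q * x / (a * L1)) (q * x / (a * L2)) n) (q / a * x * q ^ n)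
    (P (q / a * x * q ^ n / q)) (P (q / a * x * q ^ n))" for n
  have shifted: "q * (x / q) / H1 = q * x / H1 / q" "q * (x / q) / H2 = q * x / H2 / q"
    "q * (x / q) / (a * L1) = q * x / (a * L1) / q" "q * (x / q) / (a * L2) = q * x / (a * L2) / q"
    "q / a * (x / q) = q / a * x / q" "q * (q * x) / H1 = q * x / H1 * q" "q * (q * x) / H2 = q * x / H2 * q"
    "q * (q * x) / (a * L1) = q * x / (a * L1) * q" "q * (q * x) / (a * L2) = q * x / (a * L2) * q"
    "q / a * (q * x) = q / a * x * q"
    using q(2) by (simp_all add: field_simps)
  have nd': "nondeg q (q / a)" "nondeg q (q * x / H1)" "nondeg q (q * x / H2)" "nondeg q (q * x / (a * L1))"
    "nondeg q (q * x / (a * L2))" "nondeg q (q * x / H1 / q)" "nondeg q (q * x / H2 / q)"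
    "nondeg q (q * x / H1 * q)" "nondeg q (q * x / H2 * q)" "nondeg q (q * x / (a * L1) / q)"
    "nondeg q (q * x / (a * L2) / q)" "nondeg q (q * x / (a * L1) * q)" "nondeg q (q * x / (a * L2) * q)"
    using nd unfolding shifted[symmetric] by auto
  have step: "(x - H1) * (x - H2) / x * qa1 * (V (q * x / H1 / q) (q * x / H2 / q) (q * x / (a * L1) / q)
        (q * x / (a * L2) / q) n * (q / a * x / q * q ^ n) * P (q / a * x / q * q ^ n))
      + (x - L1) * (x - L2) / x * qa2 * (V (q * x / H1 * q) (q * x / H2 * q) (q * x / (a * L1) * q)
        (q * x / (a * L2) * q) n * (q / a * x * q * q ^ n) * P (q / a * x * q * q ^ n))
      - ((qa1 + qa2) * x + qa1 / a * H1 * H2 * (1 + 1 / (q * qN)) / x + E)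
        * (V (q * x / H1) (q * x / H2) (q * x / (a * L1)) (q * x / (a * L2)) n * (q / a * x * q ^ n)
          * P (q / a * x * q ^ n))
      = Bd n - Bd (Suc n)" for n
    unfolding Bd_def V_def P_def by (rule moving_lattice_jackson_step[OF q nz(1,2,4-8) rel qde nd'(1-9)])
  have S_lim: "(\<lambda>n. q / a * x * q ^ n) \<longlonglongrightarrow> 0"
    using q(1) by (intro tendsto_mult_right_zero LIMSEQ_power_zero) simp
  then have "(\<lambda>n. q / a * x * q ^ n / q) \<longlonglongrightarrow> 0"
    by (rule tendsto_divide_zero)
  then have P_lim: "(\<lambda>n. P (q / a * x * q ^ n / q)) \<longlonglongrightarrow> 1" "(\<lambda>n. P (q / a * x * q ^ n)) \<longlonglongrightarrow> 1"
    unfolding P_def using coeff_poly_tendsto S_lim C0 by metis+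
  have Bd_lim: "Bd \<longlonglongrightarrow> q * qa2 * L1 * L2 - qa1 / a * H1 * H2"
    unfolding Bd_def
    by (rule moving_boundary_tendsto[where t = "\<lambda>n. q / a * x * q ^ n", OF _ S_lim P_lim q(2) nz(8,4-7)])
      (unfold V_def, rule tail_ratio_tendsto_1[OF q(1) nd'(1-5)])
  have Bd_0: "Bd 0 = 0"
    unfolding Bd_def moving_boundary_def using q(2) nz by simp
  show ?thesis
    unfolding shifted
    by (rule telescoping_jackson_identity[OF _ _ _ nz(3) step Bd_lim Bd_0])
      (unfold V_def P_def, (rule gshape_jackson_sums[OF q(1)], fact+)+)
qed

section \<open>The paper's parameters\<close>

lemma qpow_add: "qpow L (u + v) = qpow L u * qpow L v"
  unfolding qpow_def by (simp add: distrib_right exp_add)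

lemma qpow_diff: "qpow L (u - v) = qpow L u / qpow L v"
  unfolding qpow_def by (simp add: left_diff_distrib exp_diff)

lemma qpow_minus: "qpow L (- u) = 1 / qpow L u"
  unfolding qpow_def by (simp add: exp_minus inverse_eq_divide)

lemma qpow_nonzero: "qpow L u \<noteq> 0"
  unfolding qpow_def by simp

lemma qpow_of_nat: "exp L = q \<Longrightarrow> qpow L (of_nat n) = q ^ n"
  unfolding qpow_def by (metis exp_of_nat_mult)

lemma qpow_double: "qpow L (2 * u) = qpow L u * qpow L u"
  by (metis mult_2 qpow_add)

lemma qpow_two: "qpow L 2 = qpow L 1 * qpow L 1"
  using qpow_double[of L 1] by simp

lemma qpow_one: "qpow L 1 = qpow L (1/2) * qpow L (1/2)"
  using qpow_double[of L "1/2"] by simp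

lemma qpow_three_halves: "qpow L (3/2) = qpow L 1 * qpow L (1/2)"
  using qpow_add[of L 1 "1/2"] by simp

lemma Aop_diff:
  "Aop q L t1 t2 h1 h2 l1 l2 a1 a2 b (\<lambda>y. f y - g y) x
    = Aop q L t1 t2 h1 h2 l1 l2 a1 a2 b f x - Aop q L t1 t2 h1 h2 l1 l2 a1 a2 b g x"
  unfolding Aop_def by (simp add: algebra_simps)

text \<open>Splitting every q-power into powers of atoms and of \<open>q^(1/2)\<close> turns identities between q-powers
  into field identities.\<close>
lemmas qpow_split = qpow_add qpow_diff qpow_minus qpow_double qpow_two qpow_one

locale Aop_setting =
  fixes q L t1 t2 h1 h2 l1 l2 a1 a2 :: complex and N :: nat
  assumes q_norm: "0 < cmod q" "cmod q < 1" and exp_L: "exp L = q"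
    and t_nonzero: "t1 \<noteq> 0" "t2 \<noteq> 0"
begin

abbreviation "lam \<equiv> lam1 h1 h2 l1 l2 a1 a2 (of_nat N + 1)"
abbreviation "Xs \<equiv> xc L t1 t2 h1 h2 a1 lam N"
abbreviation "Ys \<equiv> yc L t1 t2 h1 h2 l1 l2 a1 a2 lam N"
abbreviation "Zs \<equiv> zc L a1 a2 lam N"

definition "qlam = qpow L (lam + a1)"
definition "qa1 = qpow L a1"
definition "qa2 = qpow L a2"
definition "qN = q ^ N"
definition "H1 = qpow L (h1 + 1/2) * t1"
definition "H2 = qpow L (h2 + 1/2) * t2"
definition "L1 = qpow L (l1 - 1/2) * t1"
definition "L2 = qpow L (l2 - 1/2) * t2"

lemma q_nonzero: "q \<noteq> 0"
  using q_norm by auto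

lemma q_half: "q = qpow L (1/2) * qpow L (1/2)"
  using qpow_one[of L] exp_L unfolding qpow_def by simp

lemma parameters_nonzero: "qN \<noteq> 0" "qlam \<noteq> 0" "qa1 \<noteq> 0" "H1 \<noteq> 0" "H2 \<noteq> 0" "L1 \<noteq> 0" "L2 \<noteq> 0"
  unfolding qN_def qlam_def qa1_def H1_def H2_def L1_def L2_def
  using q_nonzero t_nonzero qpow_nonzero by auto

lemma qpow_a2: "qpow L a2 = qpow L h1 * qpow L h2 * (qpow L (1/2) * qpow L (1/2)) /
    (qpow L l1 * qpow L l2 * qpow L a1 * (qpow L (1/2) * qpow L (1/2)) ^ N * (qpow L lam * qpow L lam))"
proof -
  have a2_eq: "a2 = h1 + h2 - l1 - l2 - a1 - of_nat N + 1 - 2 * lam"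
    unfolding lam1_def by (simp add: field_simps)
  show ?thesis
    by (subst (1) a2_eq, simp only: qpow_split q_half[symmetric] qpow_of_nat[OF exp_L])
      (simp add: field_simps qpow_nonzero)
qed

lemma qa2_rel: "qa2 = H1 * H2 * qa1 / (q * qN * qlam\<^sup>2 * L1 * L2)"
  unfolding qa2_def H1_def H2_def qa1_def qN_def qlam_def L1_def L2_def
  by (simp only: qpow_split q_half qpow_of_nat[OF exp_L] qpow_a2)
    (simp add: field_simps qpow_nonzero t_nonzero power2_eq_square)

lemma xc_normal_form: "Xs n = (q * qa2 * L1 * L2) * (q ^ n - 1) * (1 - (qN * qlam) / q ^ n)"
  unfolding xc_def qa2_def L1_def L2_def qN_def qlam_def
  by (simp only: qpow_split q_half qpow_of_nat[OF exp_L] qpow_a2)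
    (simp add: field_simps qpow_nonzero t_nonzero power2_eq_square)

lemma yc_normal_form:
  "Ys n = (q * qN * qlam * qa2 * (L1 + L2)) / q ^ n + (qa1 * (H1 + H2) / (qlam * q * qN)) * q ^ n"
  unfolding yc_def qa1_def qa2_def L1_def L2_def H1_def H2_def qN_def qlam_def
  by (simp only: qpow_split q_half qpow_of_nat[OF exp_L] qpow_a2)
    (simp add: field_simps qpow_nonzero t_nonzero power2_eq_square)

lemma zc_normal_form: "Zs n = (qa1 / (qN * q\<^sup>2)) * (q ^ n - ((q * qN * qlam * qa2 / qa1) + (qN * q\<^sup>2))
    + (q * qN * qlam * qa2 / qa1) * (qN * q\<^sup>2) / q ^ n)"
  unfolding zc_def qa1_def qa2_def qN_def qlam_def
  by (simp only: qpow_split q_half qpow_of_nat[OF exp_L] qpow_a2)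
    (simp add: field_simps qpow_nonzero t_nonzero power2_eq_square)

lemma zc_N2: "Zs (N + 2) = 0"
  unfolding zc_def by (simp add: qpow_def)

lemma cseq_poly_qde:
  assumes cfin: "cfin Xs Ys Zs E N = 0" and X_nonzero: "\<forall>n\<in>{1..N}. Xs n \<noteq> 0"
  shows "poly_qde q qN qlam qa1 qa2 H1 H2 L1 L2 E t (coeff_poly (cseq Xs Ys Zs E) N (t / q))
    (coeff_poly (cseq Xs Ys Zs E) N t) (coeff_poly (cseq Xs Ys Zs E) N (q * t)) = 0"
  unfolding poly_qde_expanded[OF q_nonzero parameters_nonzero qa2_rel]
  by (rule coeff_poly_qdifference_eq[OF q_nonzero xc_normal_form yc_normal_form zc_normal_form
        X_nonzero zc_N2 cfin])

lemma Aop_normal_form: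
  "Aop q L t1 t2 h1 h2 l1 l2 a1 a2 (of_nat N + 1) G x
    = (x - H1) * (x - H2) / x * G (x / q) + qa1 * qa2 * ((x - L1) * (x - L2) / x) * G (q * x)
      - ((qa1 + qa2) * x + qa1 / qlam * H1 * H2 * (1 + 1 / (q * qN)) / x) * G x"
proof -
  have c0: "qpow L ((h1 + h2 + l1 + l2 + a1 + a2) / 2) * qpow L ((of_nat N + 1) / 2) = qpow L (h1 + h2 + 1 - lam)"
    "qpow L ((h1 + h2 + l1 + l2 + a1 + a2) / 2) * qpow L (- (of_nat N + 1) / 2)
      = qpow L (h1 + h2 - lam - of_nat N)"
    unfolding qpow_add[symmetric] by (rule arg_cong[where f = "qpow L"], simp add: lam1_def field_simps)+
  have c0f: "qpow L ((h1 + h2 + l1 + l2 + a1 + a2) / 2) * (qpow L ((of_nat N + 1) / 2)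
      + qpow L (- (of_nat N + 1) / 2)) * t1 * t2 = qa1 / qlam * H1 * H2 * (1 + 1 / (q * qN))"
    unfolding distrib_left c0 qa1_def qlam_def H1_def H2_def qN_def
    by (simp only: qpow_split q_half qpow_of_nat[OF exp_L])
      (simp add: field_simps qpow_nonzero t_nonzero power2_eq_square)
  show ?thesis
    unfolding Aop_def c0f H1_def[symmetric] H2_def[symmetric] L1_def[symmetric] L2_def[symmetric]
      qpow_add[of L a1 a2] qa1_def[symmetric] qa2_def[symmetric]
    by (simp add: divide_inverse algebra_simps)
qed

lemma boundary_constant:
  "q * qa2 * L1 * L2 - qa1 / qlam * H1 * H2
    = qpow L (- lam + h1 + h2 + 1) * (qpow L (- lam - a1 - of_nat N) - 1) * t1 * t2"
  unfolding qa1_def qa2_def qlam_def H1_def H2_def L1_def L2_def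
  by (simp only: qpow_split q_half qpow_of_nat[OF exp_L] qpow_a2)
    (simp add: field_simps qpow_nonzero t_nonzero power2_eq_square)

lemma gpar_6: "gpar 6 L t1 t2 h1 h2 l1 l2 a1 lam y
    = (qlam * (q * L1) / H1, qlam * (q * L1) / H2, q * L1 / y, q * L1 / L2, qlam * (q * L1) / y, q * L1)"
proof -
  have "qpow L (lam - h1 + l1 + a1) = qlam * (q * L1) / H1"
    "qpow L (lam - h2 + l1 + a1) * t1 / t2 = qlam * (q * L1) / H2" "qpow L (l1 + 1/2) * t1 = q * L1"
    "qpow L (l1 - l2 + 1) * t1 / t2 = q * L1 / L2" "qpow L (lam + l1 + a1 + 1/2) * t1 = qlam * (q * L1)"
    unfolding qlam_def H1_def H2_def L1_def L2_def using t_nonzero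
    by (simp_all only: qpow_split q_half) (simp_all add: field_simps qpow_nonzero)
  then show ?thesis
    unfolding gpar_def by simp
qed

lemma gpar_7: "gpar 7 L t1 t2 h1 h2 l1 l2 a1 lam y
    = (qlam * (q * L2) / H2, qlam * (q * L2) / H1, q * L2 / y, q * L2 / L1, qlam * (q * L2) / y, q * L2)"
proof -
  have "qpow L (lam - h2 + l2 + a1) = qlam * (q * L2) / H2"
    "qpow L (lam - h1 + l2 + a1) * t2 / t1 = qlam * (q * L2) / H1" "qpow L (l2 + 1/2) * t2 = q * L2"
    "qpow L (- l1 + l2 + 1) * t2 / t1 = q * L2 / L1" "qpow L (lam + l2 + a1 + 1/2) * t2 = qlam * (q * L2)"
    unfolding qlam_def H1_def H2_def L1_def L2_def using t_nonzero
    by (simp_all only: qpow_split q_half) (simp_all add: field_simps qpow_nonzero)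
  then show ?thesis
    unfolding gpar_def by simp
qed

lemma gpar_8: "gpar 8 L t1 t2 h1 h2 l1 l2 a1 lam y
    = (q / qlam, q * y / H1, q * y / H2, q * y / (qlam * L1), q * y / (qlam * L2), q / qlam * y)"
proof -
  have "qpow L (- lam - a1 + 1) = q / qlam" "qpow L (- h1 + 1/2) * y / t1 = q * y / H1"
    "qpow L (- h2 + 1/2) * y / t2 = q * y / H2"
    "qpow L (- lam - l1 - a1 + 3/2) * y / t1 = q * y / (qlam * L1)"
    "qpow L (- lam - l2 - a1 + 3/2) * y / t2 = q * y / (qlam * L2)"
    unfolding qlam_def H1_def H2_def L1_def L2_def using t_nonzero
    by (simp_all only: qpow_split q_half qpow_three_halves) (simp_all add: field_simps qpow_nonzero)
  then show ?thesis
    unfolding gpar_def by simp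
qed

end

locale Aop_solution = Aop_setting +
  fixes lg :: "complex \<Rightarrow> complex" and E :: complex
  assumes lg_mult_q: "\<forall>y. y \<noteq> 0 \<longrightarrow> lg (q * y) = L + lg y"
    and cfin_zero: "cfin Xs Ys Zs E N = 0" and X_nonzero: "\<forall>n\<in>{1..N}. Xs n \<noteq> 0"
begin

abbreviation "g i \<equiv> gfun i q L lg t1 t2 h1 h2 l1 l2 a1 lam (cseq Xs Ys Zs E) N"

lemma exp_lg_mult_q:
  assumes "y \<noteq> 0"
  shows "exp (- a1 * lg (q * y)) = exp (- a1 * lg y) / qa1"
proof -
  have "lg (q * y) = L + lg y"
    using lg_mult_q assms by blast
  then have "exp (- a1 * lg (q * y)) = exp (- (a1 * L) + - a1 * lg y)"
    by (simp add: algebra_simps)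
  then have "exp (- a1 * lg (q * y)) = exp (- (a1 * L)) * exp (- a1 * lg y)"
    by (simp only: exp_add)
  then show ?thesis
    unfolding qa1_def qpow_def by (simp add: exp_minus field_simps)
qed

lemma exp_lg_div_q: "x \<noteq> 0 \<Longrightarrow> exp (- a1 * lg (x / q)) = qa1 * exp (- a1 * lg x)"
  using exp_lg_mult_q[of "x / q"] q_nonzero parameters_nonzero(3) by (simp add: field_simps)

lemma boundary_term:
  "(1 - q) * exp (- a1 * lg x) * qpow L (- lam + h1 + h2 + 1) * (qpow L (- lam - a1 - of_nat N) - 1) * t1 * t2
    = (1 - q) * exp (- a1 * lg x) * (q * qa2 * L1 * L2 - qa1 / qlam * H1 * H2)"
  unfolding boundary_constant by (simp add: mult.assoc)

lemmas qde_cseq = cseq_poly_qde[OF cfin_zero X_nonzero]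

lemma Aop_g6:
  assumes gen: "\<forall>y\<in>{x / q, x, q * x}. gen_at 6 q L t1 t2 h1 h2 l1 l2 a1 lam y"
  shows "Aop q L t1 t2 h1 h2 l1 l2 a1 a2 (of_nat N + 1) (g 6) x
    = E * g 6 x - (1 - q) * exp (- a1 * lg x) * qpow L (- lam + h1 + h2 + 1)
        * (qpow L (- lam - a1 - of_nat N) - 1) * t1 * t2"
proof -
  have x: "x \<noteq> 0"
    using gen unfolding gen_at_def by auto
  have nd: "nondeg q (qlam * (q * L1) / H1)" "nondeg q (qlam * (q * L1) / H2)" "nondeg q (q * L1 / L2)"
    "\<forall>y\<in>{x / q, x, q * x}. nondeg q (q * L1 / y) \<and> nondeg q (qlam * (q * L1) / y)"
    using gen unfolding gen_at_def gpar_6 by auto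
  show ?thesis
    unfolding Aop_normal_form gfun_def gpar_6 prod.case exp_lg_div_q[OF x] exp_lg_mult_q[OF x] boundary_term
    by (rule fixed_lattice_jackson_equation[OF q_norm(2) q_nonzero parameters_nonzero x qa2_rel qde_cseq _
          refl nd]) simp
qed

text \<open>\<open>g_7\<close> is \<open>g_6\<close> with the indices 1 and 2 exchanged.\<close>
lemma Aop_g7:
  assumes gen: "\<forall>y\<in>{x / q, x, q * x}. gen_at 7 q L t1 t2 h1 h2 l1 l2 a1 lam y"
  shows "Aop q L t1 t2 h1 h2 l1 l2 a1 a2 (of_nat N + 1) (g 7) x
    = E * g 7 x - (1 - q) * exp (- a1 * lg x) * qpow L (- lam + h1 + h2 + 1)
        * (qpow L (- lam - a1 - of_nat N) - 1) * t1 * t2"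
proof -
  have x: "x \<noteq> 0"
    using gen unfolding gen_at_def by auto
  have nd: "nondeg q (qlam * (q * L2) / H2)" "nondeg q (qlam * (q * L2) / H1)" "nondeg q (q * L2 / L1)"
    "\<forall>y\<in>{x / q, x, q * x}. nondeg q (q * L2 / y) \<and> nondeg q (qlam * (q * L2) / y)"
    using gen unfolding gen_at_def gpar_7 by auto
  have rel: "qa2 = H2 * H1 * qa1 / (q * qN * qlam\<^sup>2 * L2 * L1)"
    using qa2_rel by (simp add: ac_simps)
  have qde: "poly_qde q qN qlam qa1 qa2 H2 H1 L2 L1 E t (coeff_poly (cseq Xs Ys Zs E) N (t / q))
      (coeff_poly (cseq Xs Ys Zs E) N t) (coeff_poly (cseq Xs Ys Zs E) N (q * t)) = 0" for t
    by (subst poly_qde_swap) (rule qde_cseq)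
  have swap: "(x - H2) * (x - H1) = (x - H1) * (x - H2)" "(x - L2) * (x - L1) = (x - L1) * (x - L2)"
    "qa1 / qlam * H2 * H1 = qa1 / qlam * H1 * H2" "q * qa2 * L2 * L1 = q * qa2 * L1 * L2"
    by (simp_all add: ac_simps)
  show ?thesis
    unfolding Aop_normal_form gfun_def gpar_7 prod.case exp_lg_div_q[OF x] exp_lg_mult_q[OF x] boundary_term
    by (rule fixed_lattice_jackson_equation[OF q_norm(2) q_nonzero parameters_nonzero(1-3,5,4,7,6) x rel
          qde _ refl nd, unfolded swap]) simp
qed

lemma Aop_g8:
  assumes gen: "\<forall>y\<in>{x / q, x, q * x}. gen_at 8 q L t1 t2 h1 h2 l1 l2 a1 lam y"
  shows "Aop q L t1 t2 h1 h2 l1 l2 a1 a2 (of_nat N + 1) (g 8) x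
    = E * g 8 x - (1 - q) * exp (- a1 * lg x) * qpow L (- lam + h1 + h2 + 1)
        * (qpow L (- lam - a1 - of_nat N) - 1) * t1 * t2"
proof -
  have x: "x \<noteq> 0"
    using gen unfolding gen_at_def by auto
  have nd: "nondeg q (q / qlam)" "\<forall>y\<in>{x / q, x, q * x}. nondeg q (q * y / H1) \<and> nondeg q (q * y / H2)
      \<and> nondeg q (q * y / (qlam * L1)) \<and> nondeg q (q * y / (qlam * L2))"
    using gen unfolding gen_at_def gpar_8 by auto
  show ?thesis
    unfolding Aop_normal_form gfun_def gpar_8 prod.case exp_lg_div_q[OF x] exp_lg_mult_q[OF x] boundary_term
    by (rule moving_lattice_jackson_equation[OF q_norm(2) q_nonzero parameters_nonzero x qa2_rel qde_cseq _ nd])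
      simp
qed

end

theorem theorem3p7:
  fixes q L :: complex and lg :: "complex \<Rightarrow> complex"
    and t1 t2 h1 h2 l1 l2 a1 a2 E0 x :: complex and N :: nat
  defines "b \<equiv> of_nat N + 1 :: complex"
  defines "lam \<equiv> lam1 h1 h2 l1 l2 a1 a2 b"
  defines "X \<equiv> xc L t1 t2 h1 h2 a1 lam N"
  defines "Y \<equiv> yc L t1 t2 h1 h2 l1 l2 a1 a2 lam N"
  defines "Z \<equiv> zc L a1 a2 lam N"
  defines "g \<equiv> (\<lambda>i y. gfun i q L lg t1 t2 h1 h2 l1 l2 a1 lam (cseq X Y Z E0) N y)"
  assumes q: "0 < cmod q" "cmod q < 1" and L: "exp L = q"
    and lg_exp: "\<forall>y. y \<noteq> 0 \<longrightarrow> exp (lg y) = y"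
    and lg_q: "\<forall>y. y \<noteq> 0 \<longrightarrow> lg (q * y) = L + lg y"
    and t: "t1 \<noteq> 0" "t2 \<noteq> 0"
    and hyp1: "\<forall>j<N. - lam - a1 \<noteq> of_nat j"
    and hyp2: "lam + a2 \<in> \<real>" "Re (lam + a2) > 1"
    and cE0: "cfin X Y Z E0 N = 0"
    and genX: "\<forall>n\<in>{1..N}. X n \<noteq> 0"
    and genx: "\<forall>i\<in>{6,7,8}. \<forall>y\<in>{x / q, x, q * x}. gen_at i q L t1 t2 h1 h2 l1 l2 a1 lam y"
  shows "(\<forall>i\<in>{6,7,8}. \<forall>j\<in>{6,7,8}.
            Aop q L t1 t2 h1 h2 l1 l2 a1 a2 b (\<lambda>y. g i y - g j y) x = E0 * (g i x - g j x))
       \<and> (\<forall>i\<in>{6,7,8}.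
            Aop q L t1 t2 h1 h2 l1 l2 a1 a2 b (g i) x
              = E0 * g i x - (1 - q) * exp (- a1 * lg x) * qpow L (- lam + h1 + h2 + 1)
                  * (qpow L (- lam - a1 - of_nat N) - 1) * t1 * t2)"
proof -
  interpret Aop_solution q L t1 t2 h1 h2 l1 l2 a1 a2 N lg E0
    using q L t lg_q cE0 genX unfolding X_def Y_def Z_def lam_def b_def by unfold_locales auto
  define K where "K = (1 - q) * exp (- a1 * lg x) * qpow L (- lam + h1 + h2 + 1)
    * (qpow L (- lam - a1 - of_nat N) - 1) * t1 * t2"
  have solution: "Aop q L t1 t2 h1 h2 l1 l2 a1 a2 b (g i) x = E0 * g i x - K" if "i \<in> {6, 7, 8}" for i
    using that genx Aop_g6 Aop_g7 Aop_g8 unfolding K_def g_def lam_def b_def X_def Y_def Z_def by auto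
  show ?thesis
    unfolding Aop_diff K_def[symmetric] by (simp add: solution right_diff_distrib)
qed

end
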